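(* Let $n\ge3$ and suppose $T=T_\lambda(r,m)$ acts linearly and inner faithfully on $\Bbbk\overline{Q}$ so that $g$ acts by a rotation: $g\cdot e_i=e_{i+d}$, $g\cdot a_i=\mu_ia_{i+d}$, $g\cdot a_i^*=\mu_i^*a^*_{i+d}$ for some integer $0<d\le n-1$ and $\mu_i,\mu_i^*\in\Bbbk^\times$. Suppose there is a vertex $j$ with $\gamma_j\ne0$. Then $r=\kappa:=n/\gcd(n,d)$. If moreover $n\ne4$ or $d\ne2$, then: (1) for all $i$, $\gamma_{i+1}^r=(\mu_i\mu_{i+d}\cdots\mu_{i+(r-1)d})\gamma_i^r=(\mu_i^*\mu_{i+d}^*\cdots\mu^*_{i+(r-1)d})^{-1}\gamma_i^r$; equivalently $\gamma_{i+1}^r=\zeta_i\gamma_i^r=(\zeta_i^* )^{-1}\gamma_i^r$; (2) $\gamma_i\neq0$ for all $i$; (3) $\zeta_i^*=\zeta_i^{-1}$ for all $i$; (4) $\mu_0\mu_1\cdots\mu_{n-1}=\mu_0^*\mu_1^*\cdots\mu_{n-1}^*=1$; (5) if $\gcd(n,d)=1$ then $m=n$.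
   Context: Let $\Bbbk$ be a field, $r>1$ and $m$ positive integers with $r\mid m$, and $\lambda\in\Bbbk$ a primitive $r$-th root of unity, with $r$ coprime to the characteristic of $\Bbbk$. The generalized Taft algebra $T=T_\lambda(r,m)$ is the Hopf algebra generated by $g,x$ with relations $gx=\lambda xg$, $g^m=1$, $x^r=0$, $\Delta(g)=g\otimes g$, $\Delta(x)=1\otimes x+x\otimes g$, $\varepsilon(g)=1,\varepsilon(x)=0$, $S(g)=g^{-1}$, $S(x)=-xg^{-1}$. An action of $T$ on an algebra $A$ is a $T$-module algebra structure; so $g$ acts by an algebra automorphism and $x\cdot(ab)=a(x\cdot b)+(x\cdot a)(g\cdot b)$. It is inner faithful if no nonzero Hopf ideal $I$ of $T$ satisfies $I\cdot A=0$. Vertex indices are taken modulo $n$. $\overline{Q}$ has vertices $0,\dots,n-1$ and arrows $a_i:i\to i+1$, $a_i^*:i+1\to i$; in $\Bbbk\overline{Q}$, $e_i$ is the trivial path at $i$, $s(a),t(a)$ source and target, and $pq$ is concatenation ($p$ then $q$) if $t(p)=s(q)$, else $0$. A linear action: $g$ acts by a path-length-preserving automorphism ($g\cdot e_i=e_{g\cdot i}$) and $x$ maps vertices into the span of vertices and arrows into the span of vertices and arrows. Then there are scalars $\gamma_i$ with $x\cdot e_i=\gamma_ie_i-\gamma_i\lambda^{-1}e_{g\cdot i}$ (and $\gamma_{g\cdot i}=\lambda^{-1}\gamma_i$). Notation: $\kappa=n/\gcd(n,d)$ is the size of each $g$-orbit of vertices, and $\zeta_i=\mu_i\mu_{i+d}\cdots\mu_{i+(\kappa-1)d}$,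 $\zeta_i^*=\mu_i^*\mu_{i+d}^*\cdots\mu^*_{i+(\kappa-1)d}$. *)

theory Defs
  imports Main
begin

text \<open>Vertices 0..n-1. An arrow is a pair (i, b): (i, True) is a_i : i -> i+1 (mod n),
  (i, False) is a_i^* : i+1 -> i (mod n).  A path is a pair (v, as) of a start vertex
  v and a list of arrows; (v, []) is the trivial path e_v.  Concatenation is
  left-to-right (p then q).\<close>

type_synonym qpath = "nat \<times> (nat \<times> bool) list"

fun valid_from :: "nat \<Rightarrow> nat \<Rightarrow> (nat \<times> bool) list \<Rightarrow> bool" where
  "valid_from n v [] = True"
| "valid_from n v ((i, b) # as) =
     (i < n \<and> (if b then v = i \<and> valid_from n ((i + 1) mod n) as
                 else v = (i + 1) mod n \<and> valid_from n i as))"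

fun endp :: "nat \<Rightarrow> nat \<Rightarrow> (nat \<times> bool) list \<Rightarrow> nat" where
  "endp n v [] = v"
| "endp n v ((i, b) # as) = endp n (if b then (i + 1) mod n else i) as"

definition valid_path :: "nat \<Rightarrow> qpath \<Rightarrow> bool" where
  "valid_path n p = (fst p < n \<and> valid_from n (fst p) (snd p))"

text \<open>Elements of k Qbar: finitely supported coefficient functions on valid paths.\<close>
definition PA :: "nat \<Rightarrow> (qpath \<Rightarrow> 'k::zero) set" where
  "PA n = {f. finite {p. f p \<noteq> 0} \<and> (\<forall>p. f p \<noteq> 0 \<longrightarrow> valid_path n p)}"

definition pmul :: "nat \<Rightarrow> (qpath \<Rightarrow> 'k::comm_ring_1) \<Rightarrow> (qpath \<Rightarrow> 'k) \<Rightarrow> (qpath \<Rightarrow> 'k)" where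
  "pmul n f h = (\<lambda>(v, as). \<Sum>k\<in>{0..length as}.
       f (v, take k as) * h (endp n v (take k as), drop k as))"

definition pone :: "nat \<Rightarrow> (qpath \<Rightarrow> 'k::comm_ring_1)" where
  "pone n = (\<lambda>(v, as). if as = [] \<and> v < n then 1 else 0)"

definition pbas :: "qpath \<Rightarrow> (qpath \<Rightarrow> 'k::comm_ring_1)" where
  "pbas p = (\<lambda>q. if q = p then 1 else 0)"

definition vtx :: "nat \<Rightarrow> (qpath \<Rightarrow> 'k::comm_ring_1)" where
  "vtx i = pbas (i, [])"

definition arr :: "nat \<Rightarrow> (qpath \<Rightarrow> 'k::comm_ring_1)" where
  "arr i = pbas (i, [(i, True)])"

definition arrs :: "nat \<Rightarrow> nat \<Rightarrow> (qpath \<Rightarrow> 'k::comm_ring_1)" where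
  "arrs n i = pbas ((i + 1) mod n, [(i, False)])"

definition span_V :: "nat \<Rightarrow> (qpath \<Rightarrow> 'k::zero) set" where
  "span_V n = {f \<in> PA n. \<forall>p. f p \<noteq> 0 \<longrightarrow> snd p = []}"

definition span_VA :: "nat \<Rightarrow> (qpath \<Rightarrow> 'k::zero) set" where
  "span_VA n = {f \<in> PA n. \<forall>p. f p \<noteq> 0 \<longrightarrow> length (snd p) \<le> 1}"

text \<open>Elements are coefficient functions on the basis g^a x^b, (a,b) in {0..<m} x {0..<r}.\<close>

definition TB :: "nat \<Rightarrow> nat \<Rightarrow> (nat \<times> nat) set" where
  "TB m r = {0..<m} \<times> {0..<r}"

definition TC :: "nat \<Rightarrow> nat \<Rightarrow> (nat \<times> nat \<Rightarrow> 'k::zero) set" where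
  "TC m r = {u. \<forall>z. u z \<noteq> 0 \<longrightarrow> z \<in> TB m r}"

text \<open>Structure constants: g^a x^b * g^c x^d = lambda^(-bc) g^(a+c) x^(b+d) (zero if b+d >= r).\<close>
definition tcoef :: "'k::field \<Rightarrow> nat \<Rightarrow> nat \<Rightarrow> nat \<times> nat \<Rightarrow> nat \<times> nat \<Rightarrow> nat \<times> nat \<Rightarrow> 'k" where
  "tcoef lam m r al be z =
     (if fst z = (fst al + fst be) mod m \<and> snd z = snd al + snd be \<and> snd z < r
      then inverse (lam ^ (snd al * fst be)) else 0)"

definition tmul :: "'k::field \<Rightarrow> nat \<Rightarrow> nat \<Rightarrow> (nat \<times> nat \<Rightarrow> 'k) \<Rightarrow> (nat \<times> nat \<Rightarrow> 'k) \<Rightarrow> (nat \<times> nat \<Rightarrow> 'k)" where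
  "tmul lam m r u v = (\<lambda>z. \<Sum>al\<in>TB m r. \<Sum>be\<in>TB m r. u al * v be * tcoef lam m r al be z)"

definition tdelta :: "nat \<times> nat \<Rightarrow> (nat \<times> nat \<Rightarrow> 'k::zero_neq_one)" where
  "tdelta al = (\<lambda>z. if z = al then 1 else 0)"

fun tpow :: "'k::field \<Rightarrow> nat \<Rightarrow> nat \<Rightarrow> (nat \<times> nat \<Rightarrow> 'k) \<Rightarrow> nat \<Rightarrow> (nat \<times> nat \<Rightarrow> 'k)" where
  "tpow lam m r u 0 = tdelta (0, 0)"
| "tpow lam m r u (Suc k) = tmul lam m r (tpow lam m r u k) u"

text \<open>T tensor T, as coefficient functions on pairs of basis indices.\<close>
definition ttmul :: "'k::field \<Rightarrow> nat \<Rightarrow> nat \<Rightarrow> ((nat \<times> nat) \<times> (nat \<times> nat) \<Rightarrow> 'k)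
      \<Rightarrow> ((nat \<times> nat) \<times> (nat \<times> nat) \<Rightarrow> 'k) \<Rightarrow> ((nat \<times> nat) \<times> (nat \<times> nat) \<Rightarrow> 'k)" where
  "ttmul lam m r U V = (\<lambda>(z, z'). \<Sum>al\<in>TB m r. \<Sum>al'\<in>TB m r. \<Sum>be\<in>TB m r. \<Sum>be'\<in>TB m r.
       U (al, al') * V (be, be') * tcoef lam m r al be z * tcoef lam m r al' be' z')"

definition ttdelta :: "(nat \<times> nat) \<times> (nat \<times> nat) \<Rightarrow> ((nat \<times> nat) \<times> (nat \<times> nat) \<Rightarrow> 'k::zero_neq_one)" where
  "ttdelta w = (\<lambda>z. if z = w then 1 else 0)"

fun ttpow :: "'k::field \<Rightarrow> nat \<Rightarrow> nat \<Rightarrow> ((nat \<times> nat) \<times> (nat \<times> nat) \<Rightarrow> 'k) \<Rightarrow> nat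
      \<Rightarrow> ((nat \<times> nat) \<times> (nat \<times> nat) \<Rightarrow> 'k)" where
  "ttpow lam m r U 0 = ttdelta ((0, 0), (0, 0))"
| "ttpow lam m r U (Suc k) = ttmul lam m r (ttpow lam m r U k) U"

text \<open>Comultiplication: Delta(g) = g (x) g, Delta(x) = 1 (x) x + x (x) g, extended multiplicatively.\<close>
definition tDelta :: "'k::field \<Rightarrow> nat \<Rightarrow> nat \<Rightarrow> (nat \<times> nat \<Rightarrow> 'k) \<Rightarrow> ((nat \<times> nat) \<times> (nat \<times> nat) \<Rightarrow> 'k)" where
  "tDelta lam m r u = (\<lambda>w. \<Sum>al\<in>TB m r. u al *
      ttmul lam m r (ttpow lam m r (ttdelta ((1, 0), (1, 0))) (fst al))
                    (ttpow lam m r (\<lambda>z. ttdelta ((0, 0), (0, 1)) z + ttdelta ((0, 1), (1, 0)) z) (snd al)) w)"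

definition teps :: "nat \<Rightarrow> (nat \<times> nat \<Rightarrow> 'k::comm_ring_1) \<Rightarrow> 'k" where
  "teps m u = (\<Sum>a<m. u (a, 0))"

text \<open>Antipode: S(g) = g^(-1) = g^(m-1), S(x) = - x g^(-1), extended anti-multiplicatively.\<close>
definition tS :: "'k::field \<Rightarrow> nat \<Rightarrow> nat \<Rightarrow> (nat \<times> nat \<Rightarrow> 'k) \<Rightarrow> (nat \<times> nat \<Rightarrow> 'k)" where
  "tS lam m r u = (\<lambda>z. \<Sum>al\<in>TB m r. u al *
      tmul lam m r (tpow lam m r (\<lambda>y. - tmul lam m r (tdelta (0, 1)) (tdelta (m - 1, 0)) y) (snd al))
                   (tpow lam m r (tdelta (m - 1, 0)) (fst al)) z)"

definition tens :: "(nat \<times> nat \<Rightarrow> 'k::times) \<Rightarrow> (nat \<times> nat \<Rightarrow> 'k) \<Rightarrow> ((nat \<times> nat) \<times> (nat \<times> nat) \<Rightarrow> 'k)" where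
  "tens u t = (\<lambda>(z, z'). u z * t z')"

text \<open>I (x) T + T (x) I.\<close>
definition ITTI :: "nat \<Rightarrow> nat \<Rightarrow> (nat \<times> nat \<Rightarrow> 'k::comm_ring_1) set \<Rightarrow> ((nat \<times> nat) \<times> (nat \<times> nat) \<Rightarrow> 'k) set" where
  "ITTI m r I = {Z. \<exists>(N::nat) us ts vs ws. (\<forall>k<N. us k \<in> I \<and> ts k \<in> TC m r \<and> vs k \<in> TC m r \<and> ws k \<in> I)
      \<and> Z = (\<lambda>w. \<Sum>k<N. tens (us k) (ts k) w + tens (vs k) (ws k) w)}"

definition taft_ideal :: "'k::field \<Rightarrow> nat \<Rightarrow> nat \<Rightarrow> (nat \<times> nat \<Rightarrow> 'k) set \<Rightarrow> bool" where
  "taft_ideal lam m r I = (I \<subseteq> TC m r \<and> (\<lambda>_. 0) \<in> I \<and>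
      (\<forall>u\<in>I. \<forall>v\<in>I. (\<lambda>z. u z + v z) \<in> I) \<and>
      (\<forall>u\<in>I. \<forall>t\<in>TC m r. tmul lam m r t u \<in> I \<and> tmul lam m r u t \<in> I))"

definition hopf_ideal :: "'k::field \<Rightarrow> nat \<Rightarrow> nat \<Rightarrow> (nat \<times> nat \<Rightarrow> 'k) set \<Rightarrow> bool" where
  "hopf_ideal lam m r I = (taft_ideal lam m r I \<and>
      (\<forall>u\<in>I. tDelta lam m r u \<in> ITTI m r I) \<and>
      (\<forall>u\<in>I. teps m u = 0) \<and>
      (\<forall>u\<in>I. tS lam m r u \<in> I))"

text \<open>A T-module algebra structure on k Qbar is given by the actions G of g and X of x:
  linear endomorphisms satisfying the defining relations of T and the module algebra
  conditions on the generators.\<close>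
definition taft_module_algebra :: "nat \<Rightarrow> 'k::field \<Rightarrow> nat \<Rightarrow> nat
     \<Rightarrow> ((qpath \<Rightarrow> 'k) \<Rightarrow> (qpath \<Rightarrow> 'k)) \<Rightarrow> ((qpath \<Rightarrow> 'k) \<Rightarrow> (qpath \<Rightarrow> 'k)) \<Rightarrow> bool" where
  "taft_module_algebra n lam m r G X =
    ((\<forall>f\<in>PA n. G f \<in> PA n \<and> X f \<in> PA n) \<and>
     (\<forall>f\<in>PA n. \<forall>h\<in>PA n. G (\<lambda>p. f p + h p) = (\<lambda>p. G f p + G h p)
                        \<and> X (\<lambda>p. f p + h p) = (\<lambda>p. X f p + X h p)) \<and>
     (\<forall>f\<in>PA n. \<forall>c. G (\<lambda>p. c * f p) = (\<lambda>p. c * G f p) \<and> X (\<lambda>p. c * f p) = (\<lambda>p. c * X f p)) \<and>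
     (\<forall>f\<in>PA n. \<forall>h\<in>PA n. G (pmul n f h) = pmul n (G f) (G h)
          \<and> X (pmul n f h) = (\<lambda>p. pmul n f (X h) p + pmul n (X f) (G h) p)) \<and>
     G (pone n) = pone n \<and> X (pone n) = (\<lambda>_. 0) \<and>
     (\<forall>f\<in>PA n. G (X f) = (\<lambda>p. lam * X (G f) p) \<and> (G ^^ m) f = f \<and> (X ^^ r) f = (\<lambda>_. 0)))"

definition tact :: "nat \<Rightarrow> nat \<Rightarrow> ((qpath \<Rightarrow> 'k) \<Rightarrow> (qpath \<Rightarrow> 'k)) \<Rightarrow> ((qpath \<Rightarrow> 'k) \<Rightarrow> (qpath \<Rightarrow> 'k))
     \<Rightarrow> (nat \<times> nat \<Rightarrow> 'k::comm_ring_1) \<Rightarrow> (qpath \<Rightarrow> 'k) \<Rightarrow> (qpath \<Rightarrow> 'k)" where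
  "tact m r G X t f = (\<lambda>p. \<Sum>al\<in>TB m r. t al * (G ^^ fst al) ((X ^^ snd al) f) p)"

definition inner_faithful :: "nat \<Rightarrow> 'k::field \<Rightarrow> nat \<Rightarrow> nat
     \<Rightarrow> ((qpath \<Rightarrow> 'k) \<Rightarrow> (qpath \<Rightarrow> 'k)) \<Rightarrow> ((qpath \<Rightarrow> 'k) \<Rightarrow> (qpath \<Rightarrow> 'k)) \<Rightarrow> bool" where
  "inner_faithful n lam m r G X =
     (\<not> (\<exists>I. hopf_ideal lam m r I \<and> I \<noteq> {\<lambda>_. 0} \<and>
            (\<forall>t\<in>I. \<forall>f\<in>PA n. tact m r G X t f = (\<lambda>_. 0))))"

definition kappa :: "nat \<Rightarrow> nat \<Rightarrow> nat" where
  "kappa n d = n div gcd n d"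

definition zeta :: "nat \<Rightarrow> nat \<Rightarrow> (nat \<Rightarrow> 'k::comm_ring_1) \<Rightarrow> nat \<Rightarrow> 'k" where
  "zeta n d mu i = (\<Prod>k<kappa n d. mu ((i + k * d) mod n))"

end

(*
  On the span of the vertices, X is the diagonal map gam plus a weighted rotation by d, and
  gam is multiplied by inverse lam along each g-orbit. Iterating X along an orbit of length
  kappa, the condition X^r = 0 forces r = kappa.

  Unless n = 4 and d = 2, X never mixes the a-coefficients with the a*-coefficients, so the
  a-coefficients of X^k(a_i), and likewise the a*-coefficients of X^k applied to a*_i, obey the
  same kind of orbit recurrence. After kappa = r steps its value at i is
  gam_(i+1)^r - zeta_i gam_i^r, the sign coming from the product of the -lam^(-l), l < r,
  which is -1; X^r = 0 makes it vanish.
  This is (1); (2)-(4) follow by chaining (1) around the cycle and grouping the product of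
  all mu_i into the orbit products zeta_i.

  For (5): if gcd n d = 1 then g^n acts trivially. If moreover m > n, the elements of T whose
  coefficients sum to zero over every residue class of exponents of g modulo n form a nonzero
  Hopf ideal (the kernel of the reduction T(r,m) -> T(r,n)) that annihilates the path algebra,
  contradicting inner faithfulness.
*)

theory Submission
  imports Defs
begin

section \<open>Finitely supported elements of the path algebra\<close>

lemma sum_eq_single:
  assumes "finite S" "a \<in> S" "\<forall>x\<in>S. x \<noteq> a \<longrightarrow> f x = 0"
  shows "sum f S = f a"
  using assms by (simp add: sum.remove sum.neutral)

lemma PA_zero: "(\<lambda>_. 0) \<in> PA n"
  by (simp add: PA_def)

lemma PA_add:
  assumes "(f :: qpath \<Rightarrow> 'k::comm_ring_1) \<in> PA n" "h \<in> PA n"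
  shows "(\<lambda>p. f p + h p) \<in> PA n"
proof -
  have "{p. f p + h p \<noteq> 0} \<subseteq> {p. f p \<noteq> 0} \<union> {p. h p \<noteq> 0}" by auto
  with assms show ?thesis
    unfolding PA_def by (auto intro: finite_subset)
qed

lemma PA_scale: "f \<in> PA n \<Longrightarrow> (\<lambda>p. (c :: 'k::comm_ring_1) * f p) \<in> PA n"
  unfolding PA_def by (auto intro: rev_finite_subset dest: mult_not_zero)

lemma PA_sum:
  "finite S \<Longrightarrow> \<forall>k\<in>S. (fs k :: qpath \<Rightarrow> 'k::comm_ring_1) \<in> PA n \<Longrightarrow> (\<lambda>q. \<Sum>k\<in>S. fs k q) \<in> PA n"
proof (induction S rule: finite_induct)
  case empty
  then show ?case by (simp add: PA_zero)
next
  case (insert x F)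
  then show ?case using PA_add[of "fs x" n "\<lambda>q. \<Sum>k\<in>F. fs k q"] by simp
qed

lemma pbas_PA: "valid_path n p \<Longrightarrow> (pbas p :: qpath \<Rightarrow> 'k::comm_ring_1) \<in> PA n"
  unfolding PA_def pbas_def by auto

lemma vtx_PA: "i < n \<Longrightarrow> (vtx i :: qpath \<Rightarrow> 'k::comm_ring_1) \<in> PA n"
  unfolding vtx_def by (rule pbas_PA) (simp add: valid_path_def)

lemma arr_PA: "i < n \<Longrightarrow> (arr i :: qpath \<Rightarrow> 'k::comm_ring_1) \<in> PA n"
  unfolding arr_def by (rule pbas_PA) (simp add: valid_path_def)

lemma arrs_PA: "i < n \<Longrightarrow> (arrs n i :: qpath \<Rightarrow> 'k::comm_ring_1) \<in> PA n"
  unfolding arrs_def by (rule pbas_PA) (simp add: valid_path_def)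

lemma PA_basis_expansion:
  assumes "f \<in> PA n"
  shows "f = (\<lambda>q. \<Sum>p\<in>{p. f p \<noteq> 0}. f p * pbas p q)"
proof
  fix q
  have fin: "finite {p. f p \<noteq> 0}" using assms by (simp add: PA_def)
  show "f q = (\<Sum>p\<in>{p. f p \<noteq> 0}. f p * pbas p q)"
  proof (cases "f q = 0")
    case True
    then show ?thesis by (auto simp: pbas_def intro!: sum.neutral)
  next
    case False
    have "(\<Sum>p\<in>{p. f p \<noteq> 0}. f p * pbas p q) = f q * pbas q q"
      by (rule sum_eq_single) (use False fin in \<open>auto simp: pbas_def\<close>)
    then show ?thesis by (simp add: pbas_def)
  qed
qed

locale pa_linear =
  fixes n :: nat and L :: "(qpath \<Rightarrow> 'k::comm_ring_1) \<Rightarrow> (qpath \<Rightarrow> 'k)"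
  assumes closed: "\<forall>f\<in>PA n. L f \<in> PA n"
    and additive: "\<forall>f\<in>PA n. \<forall>h\<in>PA n. L (\<lambda>p. f p + h p) = (\<lambda>p. L f p + L h p)"
    and homogeneous: "\<forall>f\<in>PA n. \<forall>c. L (\<lambda>p. c * f p) = (\<lambda>p. c * L f p)"
begin

lemma map_closed: "f \<in> PA n \<Longrightarrow> L f \<in> PA n"
  using closed by blast

lemma map_add: "f \<in> PA n \<Longrightarrow> h \<in> PA n \<Longrightarrow> L (\<lambda>p. f p + h p) = (\<lambda>p. L f p + L h p)"
  using additive by blast

lemma map_scale: "f \<in> PA n \<Longrightarrow> L (\<lambda>p. c * f p) = (\<lambda>p. c * L f p)"
  using homogeneous by blast

lemma map_zero: "L (\<lambda>_. 0) = (\<lambda>_. 0)"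
  using map_scale[OF PA_zero, of 0] by simp

lemma map_lincomb2:
  assumes "f \<in> PA n" "h \<in> PA n"
  shows "L (\<lambda>p. a * f p + b * h p) = (\<lambda>p. a * L f p + b * L h p)"
  using assms map_add[OF PA_scale PA_scale] map_scale by simp

lemma map_sum:
  "finite S \<Longrightarrow> \<forall>k\<in>S. fs k \<in> PA n \<Longrightarrow> L (\<lambda>q. \<Sum>k\<in>S. fs k q) = (\<lambda>q. \<Sum>k\<in>S. L (fs k) q)"
proof (induction S rule: finite_induct)
  case empty
  then show ?case by (simp add: map_zero)
next
  case (insert x F)
  then show ?case using map_add[of "fs x" "\<lambda>q. \<Sum>k\<in>F. fs k q"] PA_sum[of F fs n] by simp
qed

lemma map_lincomb:
  assumes "finite S" "\<forall>k\<in>S. fs k \<in> PA n"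
  shows "L (\<lambda>q. \<Sum>k\<in>S. c k * fs k q) = (\<lambda>q. \<Sum>k\<in>S. c k * L (fs k) q)"
  using assms map_sum[of S "\<lambda>k q. c k * fs k q"] by (simp add: PA_scale map_scale)

lemma map_basis_expansion:
  assumes f: "f \<in> PA n"
  shows "L f = (\<lambda>q. \<Sum>p\<in>{p. f p \<noteq> 0}. f p * L (pbas p) q)"
proof -
  have "valid_path n p" if "f p \<noteq> 0" for p
    using f that unfolding PA_def by blast
  then have "\<forall>p\<in>{p. f p \<noteq> 0}. pbas p \<in> PA n"
    by (auto intro: pbas_PA)
  moreover have "finite {p. f p \<noteq> 0}"
    using f by (simp add: PA_def)
  ultimately show ?thesis
    using map_lincomb[of "{p. f p \<noteq> 0}" pbas f] PA_basis_expansion[OF f] by simp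
qed

lemma funpow_closed: "f \<in> PA n \<Longrightarrow> (L ^^ k) f \<in> PA n"
  by (induction k) (auto simp: map_closed)

end

section \<open>Products of paths\<close>

lemma pmul_vertex_supported_left:
  assumes "\<forall>v as. as \<noteq> [] \<longrightarrow> f (v, as) = (0::'k::comm_ring_1)"
  shows "pmul n f h (v, as) = f (v, []) * h (v, as)"
proof -
  have "pmul n f h (v, as) = (\<Sum>k\<in>{0..length as}. f (v, take k as) * h (endp n v (take k as), drop k as))"
    by (simp add: pmul_def)
  also have "\<dots> = f (v, take 0 as) * h (endp n v (take 0 as), drop 0 as)"
  proof (rule sum_eq_single)
    show "\<forall>x\<in>{0..length as}. x \<noteq> 0 \<longrightarrow> f (v, take x as) * h (endp n v (take x as), drop x as) = 0"
    proof (intro ballI impI)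
      fix x assume x: "x \<in> {0..length as}" "x \<noteq> 0"
      then have "take x as \<noteq> []" by auto
      then show "f (v, take x as) * h (endp n v (take x as), drop x as) = 0" using assms by simp
    qed
  qed auto
  finally show ?thesis by simp
qed

lemma pmul_vertex_supported_right:
  assumes "\<forall>v as. as \<noteq> [] \<longrightarrow> f (v, as) = (0::'k::comm_ring_1)"
  shows "pmul n h f (v, as) = h (v, as) * f (endp n v as, [])"
proof -
  have "pmul n h f (v, as) = (\<Sum>k\<in>{0..length as}. h (v, take k as) * f (endp n v (take k as), drop k as))"
    by (simp add: pmul_def)
  also have "\<dots> = h (v, take (length as) as) * f (endp n v (take (length as) as), drop (length as) as)"
  proof (rule sum_eq_single)
    show "\<forall>x\<in>{0..length as}. x \<noteq> length as \<longrightarrow> h (v, take x as) * f (endp n v (take x as), drop x as) = 0"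
    proof (intro ballI impI)
      fix x assume x: "x \<in> {0..length as}" "x \<noteq> length as"
      then have "drop x as \<noteq> []" by auto
      then show "h (v, take x as) * f (endp n v (take x as), drop x as) = 0" using assms by simp
    qed
  qed auto
  finally show ?thesis by simp
qed


lemma pmul_pbas:
  "pmul n (pbas (v, xs)) (pbas (w, ys)) (u, zs) =
     (if endp n v xs = w \<and> u = v \<and> zs = xs @ ys then (1::'k::comm_ring_1) else 0)"
proof -
  let ?t = "\<lambda>k. (pbas (v, xs) (u, take k zs) :: 'k) * pbas (w, ys) (endp n u (take k zs), drop k zs)"
  have "pmul n (pbas (v, xs)) (pbas (w, ys)) (u, zs) = (\<Sum>k\<in>{0..length zs}. ?t k)"
    by (simp add: pmul_def)
  also have "\<dots> = (if endp n v xs = w \<and> u = v \<and> zs = xs @ ys then 1 else 0)"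
  proof (cases "length xs \<le> length zs")
    case True
    have "(\<Sum>k\<in>{0..length zs}. ?t k) = ?t (length xs)"
    proof (rule sum_eq_single)
      show "\<forall>x\<in>{0..length zs}. x \<noteq> length xs \<longrightarrow> ?t x = 0"
      proof (intro ballI impI)
        fix x assume x: "x \<in> {0..length zs}" "x \<noteq> length xs"
        then have "take x zs \<noteq> xs" by auto
        then show "?t x = 0" by (simp add: pbas_def)
      qed
    qed (use True in auto)
    also have "?t (length xs) = (if endp n v xs = w \<and> u = v \<and> zs = xs @ ys then 1 else 0)"
    proof (cases "u = v \<and> take (length xs) zs = xs")
      case True2: True
      then have zs: "zs = xs @ drop (length xs) zs" by (metis append_take_drop_id)
      show ?thesis using True2 by (auto simp: pbas_def) (metis zs)+
    next
      case False
      then show ?thesis by (auto simp: pbas_def)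
    qed
    finally show ?thesis .
  next
    case False
    have "\<forall>k\<in>{0..length zs}. ?t k = 0"
    proof
      fix k assume "k \<in> {0..length zs}"
      then have "take k zs \<noteq> xs" using False by auto
      then show "?t k = 0" by (simp add: pbas_def)
    qed
    then show ?thesis using False by (auto simp: sum.neutral)
  qed
  finally show ?thesis .
qed

lemma vtx_apply: "vtx i (v, as) = (if v = i \<and> as = [] then 1 else 0)"
  by (auto simp: vtx_def pbas_def)
lemma arr_apply: "arr i (v, as) = (if v = i \<and> as = [(i, True)] then 1 else 0)"
  by (auto simp: arr_def pbas_def)
lemma arrs_apply: "arrs n i (v, as) = (if v = (i + 1) mod n \<and> as = [(i, False)] then 1 else 0)"
  by (auto simp: arrs_def pbas_def)

lemma mult_indicator: "x * (if P then 1 else 0) = (if P then x else (0::'a::{mult_zero,monoid_mult}))"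
  by simp

lemma vtx_vertex_supported: "\<forall>v as. as \<noteq> [] \<longrightarrow> vtx i (v, as) = 0"
  by (simp add: vtx_apply)

lemma pbas_cons:
  "pbas (v, a # as) = pmul n (pbas (v, [a])) (pbas (endp n v [a], as))"
proof
  fix q :: qpath
  obtain u zs where q: "q = (u, zs)" by (cases q)
  show "pbas (v, a # as) q = pmul n (pbas (v, [a])) (pbas (endp n v [a], as)) q"
    unfolding q pmul_pbas by (auto simp: pbas_def)
qed


lemma vtx_mult_arr: "pmul n (vtx i) (arr i) = (arr i :: qpath \<Rightarrow> 'k::comm_ring_1)"
proof
  fix q :: qpath show "pmul n (vtx i) (arr i) q = arr i q"
    by (cases q) (simp only: vtx_def arr_def pmul_pbas, auto simp: pbas_def)
qed
lemma arr_mult_vtx: "pmul n (arr i) (vtx ((i + 1) mod n)) = (arr i :: qpath \<Rightarrow> 'k::comm_ring_1)"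
proof
  fix q :: qpath show "pmul n (arr i) (vtx ((i + 1) mod n)) q = arr i q"
    by (cases q) (simp only: vtx_def arr_def pmul_pbas, auto simp: pbas_def)
qed
lemma vtx_mult_arrs: "pmul n (vtx ((l + 1) mod n)) (arrs n l) = (arrs n l :: qpath \<Rightarrow> 'k::comm_ring_1)"
proof
  fix q :: qpath show "pmul n (vtx ((l + 1) mod n)) (arrs n l) q = arrs n l q"
    by (cases q) (simp only: vtx_def arrs_def pmul_pbas, auto simp: pbas_def)
qed
lemma arrs_mult_vtx: "pmul n (arrs n l) (vtx l) = (arrs n l :: qpath \<Rightarrow> 'k::comm_ring_1)"
proof
  fix q :: qpath show "pmul n (arrs n l) (vtx l) q = arrs n l q"
    by (cases q) (simp only: vtx_def arrs_def pmul_pbas, auto simp: pbas_def)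
qed

section \<open>Orbits of a rotation of the vertices\<close>

lemma kappa_pos: "0 < n \<Longrightarrow> 0 < kappa n d"
  unfolding kappa_def by (simp add: div_greater_zero_iff gcd_le1_nat)

lemma dvd_mult_iff_kappa_dvd:
  assumes n: "0 < n"
  shows "(n dvd l * d) = (kappa n d dvd l)"
proof -
  let ?g = "gcd n d"
  have g: "0 < ?g" using n by simp
  define d' where "d' = d div ?g"
  have d: "d = ?g * d'" unfolding d'_def by simp
  have nn: "n = ?g * kappa n d" unfolding kappa_def by simp
  have dd: "d div ?g = d'" unfolding d'_def by simp
  have cop: "coprime (kappa n d) d'"
    using div_gcd_coprime[of n d] n dd unfolding kappa_def by simp
  have "(n dvd l * d) = (?g * kappa n d dvd ?g * (l * d'))"
    by (subst nn, subst d) (simp add: ac_simps)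
  also have "\<dots> = (kappa n d dvd l * d')" using g n by simp
  also have "\<dots> = (kappa n d dvd l)" using cop by (simp add: coprime_dvd_mult_left_iff)
  finally show ?thesis .
qed

lemma orbit_eq_iff:
  assumes n: "0 < n" and le: "l \<le> l'"
  shows "((i + l * d) mod n = (i + l' * d) mod n) = (kappa n d dvd (l' - l))"
proof -
  have "((i + l * d) mod n = (i + l' * d) mod n) = (n dvd (i + l' * d) - (i + l * d))"
    using le by (subst eq_commute, intro mod_eq_dvd_iff_nat) (simp add: mult_le_mono1)
  also have "(i + l' * d) - (i + l * d) = (l' - l) * d" by (simp add: diff_mult_distrib)
  finally show ?thesis using dvd_mult_iff_kappa_dvd[OF n] by simp
qed

lemma orbit_inj:
  assumes n: "0 < n" and l: "l < kappa n d" "l' < kappa n d"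
    and eq: "(i + l * d) mod n = (i + l' * d) mod n"
  shows "l = l'"
proof (rule ccontr)
  assume ne: "l \<noteq> l'"
  show False
  proof (cases "l < l'")
    case True
    then have "kappa n d dvd (l' - l)" using orbit_eq_iff[OF n, of l l' i d] eq by simp
    moreover have "0 < l' - l" "l' - l < kappa n d" using True l by auto
    ultimately show False by (meson nat_dvd_not_less)
  next
    case False
    then have "kappa n d dvd (l - l')" using orbit_eq_iff[OF n, of l' l i d] eq ne by simp
    moreover have "0 < l - l'" "l - l' < kappa n d" using False ne l by auto
    ultimately show False by (meson nat_dvd_not_less)
  qed
qed

lemma orbit_period: "0 < n \<Longrightarrow> (i + kappa n d * d) mod n = i mod n"
  using orbit_eq_iff[of n 0 "kappa n d" i d] by simp

lemma orbit_Suc: "(i + Suc l * d) mod n = ((i + l * d) mod n + d) mod n"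
proof -
  have "i + Suc l * d = (i + l * d) + d" by simp
  then show ?thesis by (simp only: mod_add_left_eq)
qed

lemma rotate_back_forth: "0 < (n::nat) \<Longrightarrow> d \<le> n \<Longrightarrow> j < n \<Longrightarrow> ((j + n - d) mod n + d) mod n = j"
proof -
  assume a: "0 < n" "d \<le> n" "j < n"
  have "((j + n - d) mod n + d) mod n = (j + n - d + d) mod n" by (rule mod_add_left_eq)
  also have "j + n - d + d = j + n" using a by simp
  finally show ?thesis using a by simp
qed

lemma rotate_preimage: "0 < (n::nat) \<Longrightarrow> d \<le> n \<Longrightarrow> j < n \<Longrightarrow> l < n \<Longrightarrow> (l + d) mod n = j \<Longrightarrow> l = (j + n - d) mod n"
proof -
  assume a: "0 < n" "d \<le> n" "j < n" "l < n" "(l + d) mod n = j"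
  have "(j + n - d) mod n = ((l + d) mod n + n - d) mod n" using a by simp
  also have "\<dots> = (l + d + n - d) mod n"
  proof -
    have "((l + d) mod n + (n - d)) mod n = (l + d + (n - d)) mod n" by (rule mod_add_left_eq)
    then show ?thesis using a by simp
  qed
  also have "\<dots> = l" using a by simp
  finally show ?thesis by simp
qed

lemma mod_add_right_cancel_nat:
  assumes "(a + c) mod n = (b + c) mod (n::nat)" shows "a mod n = b mod n"
proof (cases "a \<le> b")
  case True
  have "n dvd (b + c) - (a + c)" using assms True mod_eq_dvd_iff_nat[of "a + c" "b + c" n] by simp
  then have "n dvd b - a" by simp
  then show ?thesis using True mod_eq_dvd_iff_nat[of a b n] by simp
next
  case False
  have "n dvd (a + c) - (b + c)" using assms False mod_eq_dvd_iff_nat[of "b + c" "a + c" n] by simp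
  then have "n dvd a - b" by simp
  then show ?thesis using False mod_eq_dvd_iff_nat[of b a n] by simp
qed

lemma orbit_bij:
  fixes n d :: nat
  assumes n: "0 < n"
  shows "bij_betw (\<lambda>(i, k). (i0 + i + k * d) mod n) ({..<gcd n d} \<times> {..<kappa n d}) {..<n}"
proof -
  let ?g = "gcd n d" and ?K = "kappa n d" and ?h = "\<lambda>(i, k). (i0 + i + k * d) mod n"
  have g0: "0 < ?g" using n by simp
  have inj: "inj_on ?h ({..<?g} \<times> {..<?K})"
  proof (rule inj_onI)
    fix x y assume x: "x \<in> {..<?g} \<times> {..<?K}" and y: "y \<in> {..<?g} \<times> {..<?K}" and e: "?h x = ?h y"
    obtain i k where xi: "x = (i, k)" by (cases x)
    obtain i' k' where yi: "y = (i', k')" by (cases y)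
    have e0: "((i + k * d) + i0) mod n = ((i' + k' * d) + i0) mod n" using e xi yi by (simp add: ac_simps)
    have e1: "(i + k * d) mod n = (i' + k' * d) mod n" using mod_add_right_cancel_nat[OF e0] .
    have "(i + k * d) mod ?g = (i' + k' * d) mod ?g"
    proof -
      have "(i + k * d) mod n mod ?g = (i + k * d) mod ?g" by (simp add: mod_mod_cancel)
      moreover have "(i' + k' * d) mod n mod ?g = (i' + k' * d) mod ?g" by (simp add: mod_mod_cancel)
      ultimately show ?thesis using e1 by simp
    qed
    moreover have "(i + k * d) mod ?g = i mod ?g"
    proof -
      have "?g dvd k * d" by simp
      then show ?thesis by (simp add: mod_add_right_eq[symmetric])
    qed
    moreover have "(i' + k' * d) mod ?g = i' mod ?g"
    proof -
      have "?g dvd k' * d" by simp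
      then show ?thesis by (simp add: mod_add_right_eq[symmetric])
    qed
    ultimately have "i mod ?g = i' mod ?g" by simp
    then have ii: "i = i'" using x y xi yi by simp
    then have "k = k'" using orbit_inj[OF n, where i=i and l=k and l'=k' and d=d] e1 x y xi yi by simp
    then show "x = y" using ii xi yi by simp
  qed
  have sub: "?h ` ({..<?g} \<times> {..<?K}) \<subseteq> {..<n}" using n by auto
  have "card (?h ` ({..<?g} \<times> {..<?K})) = ?g * ?K" using card_image[OF inj] by (simp add: card_cartesian_product)
  also have "\<dots> = n" unfolding kappa_def by simp
  finally have "?h ` ({..<?g} \<times> {..<?K}) = {..<n}" using sub by (intro card_subset_eq) auto
  then show ?thesis using inj unfolding bij_betw_def by simp
qed

lemma prod_eq_prod_zeta_from:
  fixes f :: "nat \<Rightarrow> 'k::comm_ring_1"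
  assumes n: "0 < n"
  shows "(\<Prod>j<n. f j) = (\<Prod>i<gcd n d. zeta n d f (i0 + i))"
proof -
  have "(\<Prod>j<n. f j) = (\<Prod>x\<in>{..<gcd n d} \<times> {..<kappa n d}. f ((\<lambda>(i, k). (i0 + i + k * d) mod n) x))"
    by (rule prod.reindex_bij_betw[OF orbit_bij[OF n], symmetric])
  also have "\<dots> = (\<Prod>x\<in>{..<gcd n d} \<times> {..<kappa n d}. (\<lambda>i k. f ((i0 + i + k * d) mod n)) (fst x) (snd x))"
    by (rule prod.cong) auto
  also have "\<dots> = (\<Prod>i<gcd n d. \<Prod>k<kappa n d. f ((i0 + i + k * d) mod n))"
    using prod.cartesian_product[of "\<lambda>i k. f ((i0 + i + k * d) mod n)" "{..<kappa n d}" "{..<gcd n d}"]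
    by (simp add: case_prod_beta')
  finally show ?thesis unfolding zeta_def by simp
qed

lemma prod_eq_prod_zeta:
  fixes f :: "nat \<Rightarrow> 'k::comm_ring_1"
  assumes n: "0 < n"
  shows "(\<Prod>j<n. f j) = (\<Prod>i<gcd n d. zeta n d f i)"
  using prod_eq_prod_zeta_from[OF n, of f d 0] by simp

lemma dvd_less_double_eq: assumes "(n::nat) dvd x" "x < 2 * n" "0 < x" shows "x = n"
proof -
  obtain k where k: "x = n * k" using assms(1) by blast
  have "n * k < n * 2" using k assms(2) by (simp add: mult.commute)
  then have "k < 2" by simp
  moreover have "k \<noteq> 0" using k assms(3) by auto
  ultimately have "k = 1" by simp
  then show ?thesis using k by simp
qed

lemma orbit_rotate_back:
  assumes "0 < n" "d \<le> n"
  shows "((i + Suc l * d) mod n + n - d) mod n = (i + l * d) mod n"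
  using rotate_preimage[OF assms mod_less_divisor[OF assms(1)] mod_less_divisor[OF assms(1)]
      orbit_Suc[symmetric]]
  by simp

lemma orbit_rotate_back_start:
  assumes "0 < n" "d \<le> n" "i < n" "kappa n d = Suc K"
  shows "(i + n - d) mod n = (i + K * d) mod n"
  using orbit_rotate_back[OF assms(1,2), of i K] orbit_period[OF assms(1), of i d] assms(3,4)
  by simp

text \<open>The coefficients of \<open>X ^^ k\<close> applied to a vertex or an arrow obey recurrences of
  this shape; \<open>(j + n - d) mod n\<close> is the preimage of \<open>j\<close> under the rotation.\<close>

locale orbit_recurrence =
  fixes n d i :: nat and c :: "nat \<Rightarrow> nat \<Rightarrow> 'k::comm_ring_1" and al be :: "nat \<Rightarrow> 'k"
  assumes n_pos: "0 < n" and d_le: "d \<le> n" and i_less: "i < n"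
    and rec: "\<And>k j. j < n \<Longrightarrow>
      c (Suc k) j = al j * c k j + be ((j + n - d) mod n) * c k ((j + n - d) mod n)"
    and init: "\<And>j. j < n \<Longrightarrow> c 0 j = (if j = i then 1 else 0)"
begin

lemma support: "j < n \<Longrightarrow> c k j \<noteq> 0 \<Longrightarrow> \<exists>l\<le>k. j = (i + l * d) mod n"
proof (induction k arbitrary: j)
  case 0
  then show ?case using init i_less by (auto split: if_splits)
next
  case (Suc k)
  then have "c k j \<noteq> 0 \<or> c k ((j + n - d) mod n) \<noteq> 0" using rec by auto
  then show ?case
  proof
    assume "c k j \<noteq> 0"
    then show ?thesis using Suc.IH Suc.prems(1) le_SucI by blast
  next
    assume "c k ((j + n - d) mod n) \<noteq> 0"
    then obtain l where l: "l \<le> k" "(j + n - d) mod n = (i + l * d) mod n"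
      using Suc.IH n_pos by (meson mod_less_divisor)
    have "j = ((j + n - d) mod n + d) mod n"
      using rotate_back_forth[OF n_pos d_le Suc.prems(1)] by simp
    also have "\<dots> = (i + Suc l * d) mod n" using l(2) orbit_Suc by simp
    finally show ?thesis using l(1) by auto
  qed
qed

lemma vanishes_ahead:
  assumes "k < l" "l < kappa n d"
  shows "c k ((i + l * d) mod n) = 0"
proof (rule ccontr)
  assume "c k ((i + l * d) mod n) \<noteq> 0"
  then obtain l' where "l' \<le> k" "(i + l * d) mod n = (i + l' * d) mod n"
    using support n_pos by (meson mod_less_divisor)
  then show False using orbit_inj[OF n_pos, of l d l' i] assms by auto
qed

lemma value_start: "k < kappa n d \<Longrightarrow> c k i = al i ^ k"
proof (induction k)
  case 0
  then show ?case using init i_less by simp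
next
  case (Suc k)
  obtain K where K: "kappa n d = Suc K" using kappa_pos[OF n_pos] gr0_implies_Suc by blast
  have "c k ((i + n - d) mod n) = 0"
    using vanishes_ahead[of k K] orbit_rotate_back_start[OF n_pos d_le i_less K] Suc.prems K by simp
  then show ?case using rec[OF i_less] Suc by simp
qed

lemma value_front: "k < kappa n d \<Longrightarrow> c k ((i + k * d) mod n) = (\<Prod>l<k. be ((i + l * d) mod n))"
proof (induction k)
  case 0
  then show ?case using init i_less by simp
next
  case (Suc k)
  have ahead: "c k ((i + Suc k * d) mod n) = 0"
    using vanishes_ahead[of k "Suc k"] Suc.prems by simp
  have rotated: "((i + Suc k * d) mod n + n - d) mod n = (i + k * d) mod n"
    by (rule orbit_rotate_back[OF n_pos d_le])
  have "c (Suc k) ((i + Suc k * d) mod n) = be ((i + k * d) mod n) * c k ((i + k * d) mod n)"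
    using rec[OF mod_less_divisor[OF n_pos], of k "i + Suc k * d"] ahead rotated by simp
  then show ?case using Suc by (simp add: mult.commute)
qed

lemma value_period:
  "c (kappa n d) i = al i ^ kappa n d + (\<Prod>l<kappa n d. be ((i + l * d) mod n))"
proof -
  obtain K where K: "kappa n d = Suc K" using kappa_pos[OF n_pos] gr0_implies_Suc by blast
  then have "c K i = al i ^ K" "c K ((i + K * d) mod n) = (\<Prod>l<K. be ((i + l * d) mod n))"
    using value_start value_front by auto
  then show ?thesis
    using rec[OF i_less, of K] orbit_rotate_back_start[OF n_pos d_le i_less K] K
    by (simp add: mult.commute)
qed

end

lemma primitive_root_power_eq_1_dvd:
  fixes w :: "'a::monoid_mult"
  assumes root: "w ^ r = 1" and prim: "\<forall>k. 0 < k \<and> k < r \<longrightarrow> w ^ k \<noteq> 1"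
    and r: "0 < r" and K: "w ^ K = 1"
  shows "r dvd K"
proof -
  have "w ^ K = w ^ (r * (K div r) + K mod r)" by simp
  also have "\<dots> = (w ^ r) ^ (K div r) * w ^ (K mod r)" by (simp only: power_add power_mult)
  finally have "w ^ (K mod r) = 1" using root K by simp
  then have "K mod r = 0" using prim r by (meson mod_less_divisor neq0_conv)
  then show ?thesis by (simp add: mod_eq_0_iff_dvd)
qed

lemma prod_neg_powers_primitive_root:
  fixes w :: "'k::field"
  assumes r: "0 < r" and root: "w ^ r = 1" and prim: "\<forall>k. 0 < k \<and> k < r \<longrightarrow> w ^ k \<noteq> 1"
  shows "(\<Prod>l<r. - (w ^ l)) = -1"
proof -
  have "(\<Prod>l<r. - (w ^ l)) = (\<Prod>l<r. (-1) * w ^ l)" by simp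
  also have "\<dots> = (\<Prod>l<r. (-1::'k)) * (\<Prod>l<r. w ^ l)" by (rule prod.distrib)
  also have "(\<Prod>l<r. (-1::'k)) = (-1) ^ r" by simp
  also have "(\<Prod>l<r. w ^ l) = w ^ (\<Sum>l<r. l)" by (rule power_sum[symmetric])
  finally have eq0: "(\<Prod>l<r. - (w ^ l)) = (-1) ^ r * w ^ (\<Sum>l<r. l)" .
  have gauss: "(\<Sum>l<r. l) * 2 + r = r * r" for r :: nat
    by (induction r) (simp_all add: algebra_simps)
  define S where "S = (\<Sum>l<r. l)"
  have gS: "S * 2 + r = r * r" unfolding S_def by (rule gauss)
  show ?thesis
  proof (cases "even r")
    case True
    then obtain s where s: "r = 2 * s" by blast
    have s0: "0 < s" "s < r" using r s by auto
    have "(w ^ s) ^ 2 = 1" using root s by (simp add: power_mult[symmetric] mult.commute)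
    then have "w ^ s = 1 \<or> w ^ s = -1" by (simp add: power2_eq_1_iff)
    then have ws: "w ^ s = -1" using prim s0 by blast
    obtain t where t: "s = Suc t" using s0 gr0_implies_Suc by blast
    have "S = s * (r - 1)" using gS s t by (simp add: algebra_simps)
    then have "w ^ S = (-1) ^ (r - 1)" using ws by (simp add: power_mult)
    moreover have "odd (r - 1)" using True r by simp
    ultimately show ?thesis using eq0 True S_def by simp
  next
    case False
    have "even (r - 1)" using False r by simp
    then obtain s where s: "r - 1 = 2 * s" by blast
    have "S = r * s" using gS s r by (cases r) (simp_all add: algebra_simps)
    then have "w ^ S = 1" using root by (simp add: power_mult)
    then show ?thesis using eq0 False S_def by simp
  qed
qed


section \<open>Rotation actions\<close>

locale rotation_action =
  fixes lam :: "'k::field" and r m n d :: nat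
    and G X :: "(qpath \<Rightarrow> 'k) \<Rightarrow> (qpath \<Rightarrow> 'k)"
    and mu mus gam :: "nat \<Rightarrow> 'k"
  assumes r_gt: "r > 1"
    and lam_root: "lam ^ r = 1" and lam_prim: "\<forall>k. 0 < k \<and> k < r \<longrightarrow> lam ^ k \<noteq> 1"
    and n_ge: "n \<ge> 3" and d_pos: "0 < d" and d_less: "d < n"
    and modalg: "taft_module_algebra n lam m r G X"
    and mu_nz: "\<forall>i<n. mu i \<noteq> 0" and mus_nz: "\<forall>i<n. mus i \<noteq> 0"
    and G_vtx: "\<forall>i<n. G (vtx i) = vtx ((i + d) mod n)"
    and G_arr: "\<forall>i<n. G (arr i) = (\<lambda>p. mu i * arr ((i + d) mod n) p)"
    and G_arrs: "\<forall>i<n. G (arrs n i) = (\<lambda>p. mus i * arrs n ((i + d) mod n) p)"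
    and X_vtx: "\<forall>i<n. X (vtx i) \<in> span_V n"
    and X_arr: "\<forall>i<n. X (arr i) \<in> span_VA n \<and> X (arrs n i) \<in> span_VA n"
    and gam_def: "\<forall>i<n. X (vtx i) = (\<lambda>p. gam i * vtx i p - gam i * inverse lam * vtx ((i + d) mod n) p)"
    and gam_nz: "\<exists>j<n. gam j \<noteq> 0"
begin

lemma n_pos: "0 < n" using n_ge by simp
lemma d_le_n: "d \<le> n" using d_less by simp

sublocale G_lin: pa_linear n G
  using modalg unfolding taft_module_algebra_def by unfold_locales auto
sublocale X_lin: pa_linear n X
  using modalg unfolding taft_module_algebra_def by unfold_locales auto

lemma G_mult: "f \<in> PA n \<Longrightarrow> h \<in> PA n \<Longrightarrow> G (pmul n f h) = pmul n (G f) (G h)"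
  using modalg unfolding taft_module_algebra_def by blast
lemma X_mult: "f \<in> PA n \<Longrightarrow> h \<in> PA n \<Longrightarrow> X (pmul n f h) = (\<lambda>p. pmul n f (X h) p + pmul n (X f) (G h) p)"
  using modalg unfolding taft_module_algebra_def by blast
lemma G_X_commute: "f \<in> PA n \<Longrightarrow> G (X f) = (\<lambda>p. lam * X (G f) p)"
  using modalg unfolding taft_module_algebra_def by blast
lemma X_nilpotent: "f \<in> PA n \<Longrightarrow> (X ^^ r) f = (\<lambda>_. 0)"
  using modalg unfolding taft_module_algebra_def by blast

lemma lam_nz: "lam \<noteq> 0"
  using lam_root r_gt by (cases "lam = 0") (simp_all add: zero_power)

lemma rotate_ne: "j < n \<Longrightarrow> (j + d) mod n \<noteq> j"
proof
  assume j: "j < n" and e: "(j + d) mod n = j"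
  have "n dvd (j + d) - j" using e mod_eq_dvd_iff_nat[of j "j + d" n] j by simp
  then have "n dvd d" by simp
  then show False using d_pos d_less by (simp add: nat_dvd_not_less)
qed

lemma X_vtx_apply: "i < n \<Longrightarrow> X (vtx i) (v, as) =
   (if as = [] then (if v = i then gam i else 0) - (if v = (i + d) mod n then gam i * inverse lam else 0) else 0)"
  using gam_def by (auto simp: vtx_apply)

lemma gam_rotate: assumes i: "i < n" shows "gam ((i + d) mod n) = inverse lam * gam i"
proof -
  let ?j = "(i + d) mod n"
  have jn: "?j < n" using n_pos by simp
  have PAi: "vtx i \<in> PA n" "vtx ?j \<in> PA n" using i jn by (auto intro: vtx_PA)
  have e1: "X (vtx i) = (\<lambda>p. gam i * vtx i p + (- (gam i * inverse lam)) * vtx ?j p)"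
    using gam_def i by auto
  have "G (X (vtx i)) = (\<lambda>p. gam i * G (vtx i) p + (- (gam i * inverse lam)) * G (vtx ?j) p)"
    unfolding e1 by (rule G_lin.map_lincomb2[OF PAi])
  also have "\<dots> = (\<lambda>p. gam i * vtx ?j p + (- (gam i * inverse lam)) * vtx ((?j + d) mod n) p)"
    using G_vtx i jn by simp
  finally have L: "G (X (vtx i)) (?j, []) = gam i"
    using rotate_ne[OF jn] by (simp add: vtx_apply)
  have "G (X (vtx i)) = (\<lambda>p. lam * X (G (vtx i)) p)" using G_X_commute PAi by blast
  then have "G (X (vtx i)) (?j, []) = lam * X (vtx ?j) (?j, [])" using G_vtx i by simp
  also have "\<dots> = lam * gam ?j" using X_vtx_apply[OF jn] rotate_ne[OF jn] by simp
  finally have "gam i = lam * gam ?j" using L by simp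
  then show ?thesis using lam_nz by (simp add: field_simps)
qed

lemma gam_orbit: "j < n \<Longrightarrow> gam ((j + l * d) mod n) = inverse lam ^ l * gam j"
proof (induction l)
  case 0 then show ?case by simp
next
  case (Suc l)
  have "gam ((j + Suc l * d) mod n) = gam (((j + l * d) mod n + d) mod n)" by (simp only: orbit_Suc)
  also have "\<dots> = inverse lam * gam ((j + l * d) mod n)" using gam_rotate n_pos by simp
  finally show ?case using Suc by simp
qed

lemma span_V_expansion: assumes f: "f \<in> span_V n" shows "f = (\<lambda>q. \<Sum>v<n. f (v, []) * vtx v q)"
proof
  fix q :: qpath
  obtain u as where q: "q = (u, as)" by (cases q)
  show "f q = (\<Sum>v<n. f (v, []) * vtx v q)"
  proof (cases "as = [] \<and> u < n")
    case True
    have "(\<Sum>v<n. f (v, []) * vtx v q) = f (u, []) * vtx u q"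
      by (rule sum_eq_single) (use True q in \<open>auto simp: vtx_apply\<close>)
    then show ?thesis using True q by (simp add: vtx_apply)
  next
    case False
    have "f q = 0"
    proof (rule ccontr)
      assume "f q \<noteq> 0"
      then have "valid_path n q" "snd q = []" using f unfolding span_V_def PA_def q by auto
      then show False using False q by (simp add: valid_path_def)
    qed
    moreover have "(\<Sum>v<n. f (v, []) * vtx v q) = 0"
      by (rule sum.neutral) (use False q in \<open>auto simp: vtx_apply\<close>)
    ultimately show ?thesis by simp
  qed
qed

lemma span_V_iff: "f \<in> span_V n \<longleftrightarrow> f \<in> PA n \<and> (\<forall>v as. as \<noteq> [] \<longrightarrow> f (v, as) = 0)"
  unfolding span_V_def by auto

lemma X_span_V: assumes f: "f \<in> span_V n"
  shows "X f = (\<lambda>q. \<Sum>v<n. f (v, []) * X (vtx v) q)"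
proof -
  have "X f = X (\<lambda>q. \<Sum>v<n. f (v, []) * vtx v q)" using span_V_expansion[OF f] by simp
  also have "\<dots> = (\<lambda>q. \<Sum>v<n. f (v, []) * X (vtx v) q)"
    by (rule X_lin.map_lincomb) (auto intro: vtx_PA)
  finally show ?thesis .
qed

lemma X_span_V_closed: assumes f: "f \<in> span_V n" shows "X f \<in> span_V n"
proof -
  have "X f \<in> PA n" using f X_lin.map_closed unfolding span_V_def by blast
  moreover have "X f (v, as) = 0" if "as \<noteq> []" for v as
    using X_span_V[OF f] X_vtx that by (simp add: span_V_iff)
  ultimately show ?thesis by (simp add: span_V_iff)
qed

lemma sum_rotate_preimage:
  fixes F :: "nat \<Rightarrow> 'k"
  assumes j: "j < n"
  shows "(\<Sum>v<n. if j = (v + d) mod n then F v else 0) = F ((j + n - d) mod n)"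
proof -
  have "(\<Sum>v<n. if j = (v + d) mod n then F v else 0) = (if j = ((j + n - d) mod n + d) mod n then F ((j + n - d) mod n) else 0)"
  proof (rule sum_eq_single)
    show "\<forall>x\<in>{..<n}. x \<noteq> (j + n - d) mod n \<longrightarrow> (if j = (x + d) mod n then F x else 0) = 0"
      using rotate_preimage[OF n_pos d_le_n j] by auto
  qed (use n_pos in auto)
  then show ?thesis using rotate_back_forth[OF n_pos d_le_n j] by simp
qed

lemma X_span_V_vertex_coeff: assumes f: "f \<in> span_V n" and j: "j < n"
  shows "X f (j, []) = gam j * f (j, []) + (- (gam ((j + n - d) mod n) * inverse lam)) * f ((j + n - d) mod n, [])"
proof -
  have "X f (j, []) = (\<Sum>v<n. f (v, []) * X (vtx v) (j, []))" using X_span_V[OF f] by simp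
  also have "\<dots> = (\<Sum>v<n. (if j = v then f (v, []) * gam v else 0) - (if j = (v + d) mod n then f (v, []) * (gam v * inverse lam) else 0))"
    by (rule sum.cong) (use rotate_ne[OF j] in \<open>auto simp: X_vtx_apply\<close>)
  also have "\<dots> = (\<Sum>v<n. if j = v then f (v, []) * gam v else 0) - (\<Sum>v<n. if j = (v + d) mod n then f (v, []) * (gam v * inverse lam) else 0)"
    by (rule sum_subtractf)
  also have "(\<Sum>v<n. if j = v then f (v, []) * gam v else 0) = f (j, []) * gam j"
    using j by simp
  also have "(\<Sum>v<n. if j = (v + d) mod n then f (v, []) * (gam v * inverse lam) else 0)
     = f ((j + n - d) mod n, []) * (gam ((j + n - d) mod n) * inverse lam)"
    by (rule sum_rotate_preimage[OF j])
  finally show ?thesis by (simp add: algebra_simps)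
qed

lemma r_dvd_kappa:
  assumes j0: "j0 < n" "gam j0 \<noteq> 0"
  shows "r dvd kappa n d"
proof (rule primitive_root_power_eq_1_dvd[OF lam_root lam_prim])
  show "0 < r" using r_gt by simp
  have "gam j0 = gam ((j0 + kappa n d * d) mod n)"
    using orbit_period[OF n_pos, of j0 d] j0 by simp
  also have "\<dots> = inverse lam ^ kappa n d * gam j0"
    by (rule gam_orbit[OF j0(1)])
  finally show "lam ^ kappa n d = 1"
    using j0 by (simp add: power_inverse)
qed

lemma X_power_vtx_span_V: "j0 < n \<Longrightarrow> (X ^^ k) (vtx j0) \<in> span_V n"
proof (induction k)
  case 0
  then show ?case by (auto simp: span_V_iff vtx_apply intro: vtx_PA)
next
  case (Suc k)
  then show ?case using X_span_V_closed by simp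
qed

text \<open>If \<open>r < kappa n d\<close>, the coefficient of \<open>X ^^ r\<close> at the far end of the orbit is a product
  of nonzero weights, contradicting \<open>X ^^ r = 0\<close>.\<close>

lemma r_eq_kappa: "r = kappa n d"
proof -
  obtain j0 where j0: "j0 < n" "gam j0 \<noteq> 0" using gam_nz by blast
  define c where "c k j = (X ^^ k) (vtx j0) (j, [])" for k j
  have "r \<le> kappa n d"
    using r_dvd_kappa[OF j0] kappa_pos[OF n_pos] by (simp add: dvd_imp_le)
  moreover have "\<not> r < kappa n d"
  proof
    assume rK: "r < kappa n d"
    have rec: "c (Suc k) j = gam j * c k j
        + (- (gam ((j + n - d) mod n) * inverse lam)) * c k ((j + n - d) mod n)" if "j < n" for k j
      unfolding c_def using X_span_V_vertex_coeff[OF X_power_vtx_span_V[OF j0(1)] that] by simp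
    have init: "c 0 j = (if j = j0 then 1 else 0)" if "j < n" for j
      by (simp add: c_def vtx_apply)
    interpret orbit_recurrence n d j0 c gam "\<lambda>j. - (gam j * inverse lam)"
      by unfold_locales (fact n_pos d_le_n j0(1) rec init)+
    have "c r ((j0 + r * d) mod n) = (\<Prod>l<r. - (gam ((j0 + l * d) mod n) * inverse lam))"
      by (rule value_front[OF rK])
    also have "\<dots> \<noteq> 0"
      using gam_orbit[OF j0(1)] j0(2) lam_nz by simp
    finally show False
      unfolding c_def using X_nilpotent[OF vtx_PA[OF j0(1)]] by simp
  qed
  ultimately show ?thesis by simp
qed

lemma zeta_eq_prod_r: "zeta n d f i = (\<Prod>k<r. f ((i + k * d) mod n))"
  unfolding zeta_def r_eq_kappa ..


definition arr_coeff :: "(qpath \<Rightarrow> 'k) \<Rightarrow> nat \<Rightarrow> 'k" where "arr_coeff y j = y (j, [(j, True)])"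
definition arrs_coeff :: "(qpath \<Rightarrow> 'k) \<Rightarrow> nat \<Rightarrow> 'k" where "arrs_coeff y j = y ((j + 1) mod n, [(j, False)])"

lemma Suc_mod_inj: "j < n \<Longrightarrow> l < n \<Longrightarrow> (j + 1) mod n = (l + 1) mod n \<Longrightarrow> j = l"
  using mod_add_right_cancel_nat[of j 1 n l] by simp

lemma span_VA_expansion:
  assumes f: "f \<in> span_VA n"
  shows "f = (\<lambda>q. (\<Sum>v<n. f (v, []) * vtx v q) + (\<Sum>l<n. arr_coeff f l * arr l q)
      + (\<Sum>l<n. arrs_coeff f l * arrs n l q))"
proof
  fix q :: qpath
  obtain u as where q: "q = (u, as)" by (cases q)
  have valid: "f (u, as) = 0" if "\<not> valid_path n (u, as) \<or> length as > 1"
    using f that unfolding span_VA_def PA_def by fastforce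
  consider "as = []" | i b where "as = [(i, b)]" | "length as > 1"
  proof (cases as)
    case (Cons a rest)
    then show thesis using that by (cases a; cases rest) auto
  qed (use that in auto)
  then show "f q = (\<Sum>v<n. f (v, []) * vtx v q) + (\<Sum>l<n. arr_coeff f l * arr l q)
      + (\<Sum>l<n. arrs_coeff f l * arrs n l q)"
  proof cases
    case 1
    then show ?thesis unfolding q
      using valid by (cases "u < n") (auto simp: vtx_apply arr_apply arrs_apply valid_path_def mult_indicator)
  next
    case (2 i b)
    show ?thesis
    proof (cases b)
      case True
      then show ?thesis unfolding q using 2 valid
        by (cases "i < n \<and> u = i")
          (auto simp: vtx_apply arr_apply arrs_apply arr_coeff_def valid_path_def mult_indicator
            intro: sum.neutral)
    next
      case False
      then show ?thesis unfolding q using 2 valid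
        by (cases "i < n \<and> u = (i + 1) mod n")
          (auto simp: vtx_apply arr_apply arrs_apply conj_commute[of "_ = Suc _ mod _"] arrs_coeff_def
            valid_path_def mult_indicator cong: conj_cong intro: sum.neutral)
    qed
  next
    case 3
    then have "as \<noteq> []" "\<And>x. as \<noteq> [x]" by auto
    then show ?thesis unfolding q using valid 3 by (simp add: vtx_apply arr_apply arrs_apply)
  qed
qed

lemma X_span_VA: assumes f: "f \<in> span_VA n"
  shows "X f = (\<lambda>q. (\<Sum>v<n. f (v, []) * X (vtx v) q) + (\<Sum>l<n. arr_coeff f l * X (arr l) q) + (\<Sum>l<n. arrs_coeff f l * X (arrs n l) q))"
proof -
  let ?S1 = "\<lambda>q. \<Sum>v<n. f (v, []) * vtx v q"
  let ?S2 = "\<lambda>q. \<Sum>l<n. arr_coeff f l * arr l q"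
  let ?S3 = "\<lambda>q. \<Sum>l<n. arrs_coeff f l * arrs n l q"
  have P1: "?S1 \<in> PA n" by (rule PA_sum) (auto intro: PA_scale vtx_PA)
  have P2: "?S2 \<in> PA n" by (rule PA_sum) (auto intro: PA_scale arr_PA)
  have P3: "?S3 \<in> PA n" by (rule PA_sum) (auto intro: PA_scale arrs_PA)
  have P12: "(\<lambda>q. ?S1 q + ?S2 q) \<in> PA n" using PA_add[OF P1 P2] by simp
  have "X f = X (\<lambda>q. (\<lambda>q. ?S1 q + ?S2 q) q + ?S3 q)" using span_VA_expansion[OF f] by simp
  also have "\<dots> = (\<lambda>q. X (\<lambda>q. ?S1 q + ?S2 q) q + X ?S3 q)" by (rule X_lin.map_add[OF P12 P3])
  also have "X (\<lambda>q. ?S1 q + ?S2 q) = (\<lambda>q. X ?S1 q + X ?S2 q)" by (rule X_lin.map_add[OF P1 P2])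
  also have "X ?S1 = (\<lambda>q. \<Sum>v<n. f (v, []) * X (vtx v) q)" by (rule X_lin.map_lincomb) (auto intro: vtx_PA)
  also have "X ?S2 = (\<lambda>q. \<Sum>l<n. arr_coeff f l * X (arr l) q)" by (rule X_lin.map_lincomb) (auto intro: arr_PA)
  also have "X ?S3 = (\<lambda>q. \<Sum>l<n. arrs_coeff f l * X (arrs n l) q)" by (rule X_lin.map_lincomb) (auto intro: arrs_PA)
  finally show ?thesis .
qed

lemma X_span_VA_closed: assumes f: "f \<in> span_VA n" shows "X f \<in> span_VA n"
proof -
  have "X f \<in> PA n" using f X_lin.map_closed unfolding span_VA_def by blast
  moreover have "X f q = 0" if "length (snd q) > 1" for q
  proof -
    have a: "X (vtx v) q = 0" if "v < n" for v using X_vtx that \<open>length (snd q) > 1\<close> unfolding span_V_def by fastforce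
    have b: "X (arr v) q = 0" "X (arrs n v) q = 0" if "v < n" for v
      using X_arr that \<open>length (snd q) > 1\<close> unfolding span_VA_def by fastforce+
    show ?thesis using X_span_VA[OF f] a b by simp
  qed
  ultimately show ?thesis unfolding span_VA_def by force
qed

lemma arrow_coeffs_X_vtx: "v < n \<Longrightarrow> arr_coeff (X (vtx v)) j = 0 \<and> arrs_coeff (X (vtx v)) j = 0"
  using X_vtx unfolding span_V_def arr_coeff_def arrs_coeff_def by fastforce

lemma arr_coeff_X: assumes f: "f \<in> span_VA n"
  shows "arr_coeff (X f) j = (\<Sum>l<n. arr_coeff f l * arr_coeff (X (arr l)) j) + (\<Sum>l<n. arrs_coeff f l * arr_coeff (X (arrs n l)) j)"
proof -
  have "(\<Sum>v<n. f (v, []) * X (vtx v) (j, [(j, True)])) = 0"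
    by (rule sum.neutral) (use arrow_coeffs_X_vtx in \<open>simp add: arr_coeff_def\<close>)
  then show ?thesis using X_span_VA[OF f] by (simp add: arr_coeff_def)
qed

lemma arrs_coeff_X: assumes f: "f \<in> span_VA n"
  shows "arrs_coeff (X f) j = (\<Sum>l<n. arr_coeff f l * arrs_coeff (X (arr l)) j) + (\<Sum>l<n. arrs_coeff f l * arrs_coeff (X (arrs n l)) j)"
proof -
  have "(\<Sum>v<n. f (v, []) * X (vtx v) ((j + 1) mod n, [(j, False)])) = 0"
    by (rule sum.neutral) (use arrow_coeffs_X_vtx in \<open>simp add: arrs_coeff_def\<close>)
  then show ?thesis using X_span_VA[OF f] by (simp add: arrs_coeff_def)
qed



lemma X_vtx_vertex_supported: "i < n \<Longrightarrow> \<forall>v as. as \<noteq> [] \<longrightarrow> X (vtx i) (v, as) = 0"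
  using X_vtx_apply by simp

lemma G_vtx_vertex_supported: "i < n \<Longrightarrow> \<forall>v as. as \<noteq> [] \<longrightarrow> G (vtx i) (v, as) = 0"
  using G_vtx by (simp add: vtx_apply)

lemma X_arr_source: assumes i: "i < n"
  shows "X (arr i) (v, as) = vtx i (v, []) * X (arr i) (v, as) + X (vtx i) (v, []) * G (arr i) (v, as)"
proof -
  have "X (arr i) = X (pmul n (vtx i) (arr i))" by (rule arg_cong[OF vtx_mult_arr[symmetric]])
  also have "\<dots> = (\<lambda>p. pmul n (vtx i) (X (arr i)) p + pmul n (X (vtx i)) (G (arr i)) p)"
    by (rule X_mult) (use i in \<open>auto intro: vtx_PA arr_PA\<close>)
  finally have e: "X (arr i) = (\<lambda>p. pmul n (vtx i) (X (arr i)) p + pmul n (X (vtx i)) (G (arr i)) p)" .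
  from fun_cong[OF e, of "(v, as)"] show ?thesis by (simp only: pmul_vertex_supported_left[OF vtx_vertex_supported] pmul_vertex_supported_left[OF X_vtx_vertex_supported[OF i]])
qed

lemma X_arr_target: assumes i: "i < n"
  shows "X (arr i) (v, as) = arr i (v, as) * X (vtx ((i + 1) mod n)) (endp n v as, [])
     + X (arr i) (v, as) * G (vtx ((i + 1) mod n)) (endp n v as, [])"
proof -
  have i1: "(i + 1) mod n < n" using n_pos by simp
  have "X (arr i) = X (pmul n (arr i) (vtx ((i + 1) mod n)))" by (rule arg_cong[OF arr_mult_vtx[symmetric]])
  also have "\<dots> = (\<lambda>p. pmul n (arr i) (X (vtx ((i + 1) mod n))) p + pmul n (X (arr i)) (G (vtx ((i + 1) mod n))) p)"
    by (rule X_mult) (use i i1 in \<open>auto intro: vtx_PA arr_PA\<close>)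
  finally have e: "X (arr i) = (\<lambda>p. pmul n (arr i) (X (vtx ((i + 1) mod n))) p + pmul n (X (arr i)) (G (vtx ((i + 1) mod n))) p)" .
  from fun_cong[OF e, of "(v, as)"] show ?thesis by (simp only: pmul_vertex_supported_right[OF X_vtx_vertex_supported[OF i1]] pmul_vertex_supported_right[OF G_vtx_vertex_supported[OF i1]])
qed

lemma X_arrs_source: assumes l: "l < n"
  shows "X (arrs n l) (v, as) = vtx ((l + 1) mod n) (v, []) * X (arrs n l) (v, as)
     + X (vtx ((l + 1) mod n)) (v, []) * G (arrs n l) (v, as)"
proof -
  have l1: "(l + 1) mod n < n" using n_pos by simp
  have "X (arrs n l) = X (pmul n (vtx ((l + 1) mod n)) (arrs n l))" by (rule arg_cong[OF vtx_mult_arrs[symmetric]])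
  also have "\<dots> = (\<lambda>p. pmul n (vtx ((l + 1) mod n)) (X (arrs n l)) p + pmul n (X (vtx ((l + 1) mod n))) (G (arrs n l)) p)"
    by (rule X_mult) (use l l1 in \<open>auto intro: vtx_PA arrs_PA\<close>)
  finally have e: "X (arrs n l) = (\<lambda>p. pmul n (vtx ((l + 1) mod n)) (X (arrs n l)) p + pmul n (X (vtx ((l + 1) mod n))) (G (arrs n l)) p)" .
  from fun_cong[OF e, of "(v, as)"] show ?thesis by (simp only: pmul_vertex_supported_left[OF vtx_vertex_supported] pmul_vertex_supported_left[OF X_vtx_vertex_supported[OF l1]])
qed

lemma X_arrs_target: assumes l: "l < n"
  shows "X (arrs n l) (v, as) = arrs n l (v, as) * X (vtx l) (endp n v as, [])
     + X (arrs n l) (v, as) * G (vtx l) (endp n v as, [])"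
proof -
  have "X (arrs n l) = X (pmul n (arrs n l) (vtx l))" by (rule arg_cong[OF arrs_mult_vtx[symmetric]])
  also have "\<dots> = (\<lambda>p. pmul n (arrs n l) (X (vtx l)) p + pmul n (X (arrs n l)) (G (vtx l)) p)"
    by (rule X_mult) (use l in \<open>auto intro: vtx_PA arrs_PA\<close>)
  finally have e: "X (arrs n l) = (\<lambda>p. pmul n (arrs n l) (X (vtx l)) p + pmul n (X (arrs n l)) (G (vtx l)) p)" .
  from fun_cong[OF e, of "(v, as)"] show ?thesis by (simp only: pmul_vertex_supported_right[OF X_vtx_vertex_supported[OF l]] pmul_vertex_supported_right[OF G_vtx_vertex_supported[OF l]])
qed

lemma arr_coeff_X_arr: assumes i: "i < n" and j: "j < n"
  shows "arr_coeff (X (arr i)) j = (if j = i then gam ((i + 1) mod n) else 0)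
      + (if j = (i + d) mod n then - (gam i * inverse lam * mu i) else 0)"
proof (cases "j = i")
  case True
  have i1: "(i + 1) mod n < n" using n_pos by simp
  have "arr_coeff (X (arr i)) j = X (vtx ((i + 1) mod n)) ((i + 1) mod n, [])"
    using X_arr_target[OF i, of i "[(i, True)]"] True G_vtx i1 rotate_ne[OF i1]
    by (simp add: arr_coeff_def arr_apply vtx_apply)
  also have "\<dots> = gam ((i + 1) mod n)" using X_vtx_apply[OF i1] rotate_ne[OF i1] by simp
  finally show ?thesis using True rotate_ne[OF i] by simp
next
  case False
  have "arr_coeff (X (arr i)) j = X (vtx i) (j, []) * G (arr i) (j, [(j, True)])"
    using X_arr_source[OF i, of j "[(j, True)]"] False by (simp add: arr_coeff_def vtx_apply)
  also have "\<dots> = (if j = (i + d) mod n then - (gam i * inverse lam * mu i) else 0)"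
    using G_arr i False X_vtx_apply[OF i] by (auto simp: arr_apply)
  finally show ?thesis using False by simp
qed

lemma arrs_coeff_X_arr: assumes i: "i < n" and j: "j < n" and dd: "d \<noteq> n - 2"
  shows "arrs_coeff (X (arr i)) j = 0"
proof (rule ccontr)
  assume ne: "arrs_coeff (X (arr i)) j \<noteq> 0"
  let ?q = "((j + 1) mod n, [(j, False)])"
  have i1: "(i + 1) mod n < n" using n_pos by simp
  have a: "X (arr i) ?q = vtx i ((j + 1) mod n, []) * X (arr i) ?q"
    using X_arr_source[OF i, of "(j + 1) mod n" "[(j, False)]"] G_arr i by (simp add: arr_apply)
  have b: "X (arr i) ?q = X (arr i) ?q * G (vtx ((i + 1) mod n)) (j, [])"
    using X_arr_target[OF i, of "(j + 1) mod n" "[(j, False)]"] by (simp add: arr_apply)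
  have e1: "(j + 1) mod n = i" using a ne by (auto simp: arrs_coeff_def vtx_apply split: if_splits)
  have e2: "j = ((i + 1) mod n + d) mod n" using b ne G_vtx i1 by (auto simp: arrs_coeff_def vtx_apply split: if_splits)
  have "j mod n = (j + (2 + d)) mod n"
  proof -
    have "j = ((((j + 1) mod n) + 1) mod n + d) mod n" using e1 e2 by simp
    also have "\<dots> = (j + (2 + d)) mod n" by (simp add: mod_simps add.assoc)
    finally show ?thesis using j by simp
  qed
  then have "n dvd (j + (2 + d)) - j" using mod_eq_dvd_iff_nat[of j "j + (2 + d)" n] by simp
  then have "n dvd 2 + d" by simp
  moreover have "2 + d < 2 * n" using d_less n_ge by simp
  moreover have "0 < 2 + d" by simp
  ultimately have "2 + d = n" by (rule dvd_less_double_eq)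
  then show False using dd by simp
qed

lemma arr_coeff_X_arrs: assumes l: "l < n" and j: "j < n" and dd: "d \<noteq> 2"
  shows "arr_coeff (X (arrs n l)) j = 0"
proof (rule ccontr)
  assume ne: "arr_coeff (X (arrs n l)) j \<noteq> 0"
  let ?q = "(j, [(j, True)])"
  have a: "X (arrs n l) ?q = vtx ((l + 1) mod n) (j, []) * X (arrs n l) ?q"
    using X_arrs_source[OF l, of j "[(j, True)]"] G_arrs l by (simp add: arrs_apply)
  have b: "X (arrs n l) ?q = X (arrs n l) ?q * G (vtx l) ((j + 1) mod n, [])"
    using X_arrs_target[OF l, of j "[(j, True)]"] by (simp add: arrs_apply)
  have e1: "j = (l + 1) mod n" using a ne by (auto simp: arr_coeff_def vtx_apply split: if_splits)
  have e2: "(j + 1) mod n = (l + d) mod n" using b ne G_vtx l by (auto simp: arr_coeff_def vtx_apply split: if_splits)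
  have e3: "(l + 2) mod n = (l + d) mod n"
  proof -
    have "(l + 2) mod n = (((l + 1) mod n) + 1) mod n" by (simp add: mod_simps)
    then show ?thesis using e1 e2 by simp
  qed
  show False
  proof (cases "d \<ge> 2")
    case True
    have "n dvd (l + d) - (l + 2)" using e3 True mod_eq_dvd_iff_nat[of "l + 2" "l + d" n] by simp
    then have "n dvd d - 2" by simp
    moreover have "d - 2 < n" using d_less by simp
    ultimately have "d - 2 = 0" by (meson nat_dvd_not_less neq0_conv)
    then show False using True dd by simp
  next
    case False
    then have d1: "d = 1" using d_pos by simp
    have "n dvd (l + 2) - (l + d)" using e3 d1 mod_eq_dvd_iff_nat[of "l + d" "l + 2" n] by simp
    then have "n dvd 1" using d1 by simp
    then show False using n_ge by simp
  qed
qed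

lemma arrs_coeff_X_arrs: assumes l: "l < n" and j: "j < n"
  shows "arrs_coeff (X (arrs n l)) j = (if j = l then gam l else 0)
      + (if j = (l + d) mod n then - (gam ((l + 1) mod n) * inverse lam * mus l) else 0)"
proof (cases "j = l")
  case True
  have "arrs_coeff (X (arrs n l)) j = X (vtx l) (l, [])"
    using X_arrs_target[OF l, of "(l + 1) mod n" "[(l, False)]"] True G_vtx l rotate_ne[OF l]
    by (simp add: arrs_coeff_def arrs_apply vtx_apply)
  also have "\<dots> = gam l" using X_vtx_apply[OF l] rotate_ne[OF l] by simp
  finally show ?thesis using True rotate_ne[OF l] by simp
next
  case False
  have l1: "(l + 1) mod n < n" using n_pos by simp
  have ne1: "(j + 1) mod n \<noteq> (l + 1) mod n" using Suc_mod_inj[OF j l] False by blast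
  have "arrs_coeff (X (arrs n l)) j = X (vtx ((l + 1) mod n)) ((j + 1) mod n, []) * G (arrs n l) ((j + 1) mod n, [(j, False)])"
    using X_arrs_source[OF l, of "(j + 1) mod n" "[(j, False)]"] ne1 by (simp add: arrs_coeff_def vtx_apply)
  also have "\<dots> = (if j = (l + d) mod n then - (gam ((l + 1) mod n) * inverse lam * mus l) else 0)"
  proof (cases "j = (l + d) mod n")
    case True
    have u1: "((l + d) mod n + 1) mod n = ((l + 1) mod n + d) mod n" by (simp add: mod_simps ac_simps)
    have "G (arrs n l) ((j + 1) mod n, [(j, False)]) = mus l" using G_arrs l True by (simp add: arrs_apply)
    moreover have "X (vtx ((l + 1) mod n)) ((j + 1) mod n, []) = - (gam ((l + 1) mod n) * inverse lam)"
      using X_vtx_apply[OF l1] True u1 rotate_ne[OF l1] by simp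
    ultimately show ?thesis using True by simp
  next
    case False
    have "G (arrs n l) ((j + 1) mod n, [(j, False)]) = 0" using G_arrs l False by (simp add: arrs_apply)
    then show ?thesis using False by simp
  qed
  finally show ?thesis using False by simp
qed


lemma arr_span_VA: "i < n \<Longrightarrow> arr i \<in> span_VA n"
  using arr_PA[of i n] unfolding span_VA_def by (auto simp: arr_def pbas_def)
lemma arrs_span_VA: "i < n \<Longrightarrow> arrs n i \<in> span_VA n"
  using arrs_PA[of i n] unfolding span_VA_def by (auto simp: arrs_def pbas_def)

lemma X_power_span_VA: "f \<in> span_VA n \<Longrightarrow> (X ^^ k) f \<in> span_VA n"
  by (induction k) (auto intro: X_span_VA_closed)

lemma arrs_coeff_X_power_arr: assumes i: "i < n" and dd: "d \<noteq> n - 2"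
  shows "\<forall>j<n. arrs_coeff ((X ^^ k) (arr i)) j = 0"
proof (induction k)
  case 0
  show ?case by (auto simp: arrs_coeff_def arr_apply)
next
  case (Suc k)
  show ?case
  proof (intro allI impI)
    fix j assume j: "j < n"
    have "arrs_coeff ((X ^^ Suc k) (arr i)) j = (\<Sum>l<n. arr_coeff ((X ^^ k) (arr i)) l * arrs_coeff (X (arr l)) j)
        + (\<Sum>l<n. arrs_coeff ((X ^^ k) (arr i)) l * arrs_coeff (X (arrs n l)) j)"
      using arrs_coeff_X[OF X_power_span_VA[OF arr_span_VA[OF i]]] by simp
    also have "\<dots> = 0" using Suc arrs_coeff_X_arr[OF _ j dd] by simp
    finally show "arrs_coeff ((X ^^ Suc k) (arr i)) j = 0" .
  qed
qed

lemma arr_coeff_X_power_arrs: assumes i: "i < n" and dd: "d \<noteq> 2"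
  shows "\<forall>j<n. arr_coeff ((X ^^ k) (arrs n i)) j = 0"
proof (induction k)
  case 0
  show ?case by (auto simp: arr_coeff_def arrs_apply)
next
  case (Suc k)
  show ?case
  proof (intro allI impI)
    fix j assume j: "j < n"
    have "arr_coeff ((X ^^ Suc k) (arrs n i)) j = (\<Sum>l<n. arr_coeff ((X ^^ k) (arrs n i)) l * arr_coeff (X (arr l)) j)
        + (\<Sum>l<n. arrs_coeff ((X ^^ k) (arrs n i)) l * arr_coeff (X (arrs n l)) j)"
      using arr_coeff_X[OF X_power_span_VA[OF arrs_span_VA[OF i]]] by simp
    also have "\<dots> = 0" using Suc arr_coeff_X_arrs[OF _ j dd] by simp
    finally show "arr_coeff ((X ^^ Suc k) (arrs n i)) j = 0" .
  qed
qed

lemma arr_coeff_X_power_recurrence: assumes H: "n \<noteq> 4 \<or> d \<noteq> 2" and i: "i < n" and j: "j < n"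
  shows "arr_coeff ((X ^^ Suc k) (arr i)) j = gam ((j + 1) mod n) * arr_coeff ((X ^^ k) (arr i)) j
     + (- (gam ((j + n - d) mod n) * inverse lam * mu ((j + n - d) mod n))) * arr_coeff ((X ^^ k) (arr i)) ((j + n - d) mod n)"
proof -
  let ?y = "(X ^^ k) (arr i)"
  have s2: "(\<Sum>l<n. arrs_coeff ?y l * arr_coeff (X (arrs n l)) j) = 0"
  proof (cases "d = 2")
    case True
    then have "d \<noteq> n - 2" using H by auto
    then show ?thesis using arrs_coeff_X_power_arr[OF i] by simp
  next
    case False
    then show ?thesis using arr_coeff_X_arrs[OF _ j] by simp
  qed
  have "arr_coeff ((X ^^ Suc k) (arr i)) j = (\<Sum>l<n. arr_coeff ?y l * arr_coeff (X (arr l)) j)"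
    using arr_coeff_X[OF X_power_span_VA[OF arr_span_VA[OF i]]] s2 by simp
  also have "\<dots> = (\<Sum>l<n. (if j = l then arr_coeff ?y l * gam ((l + 1) mod n) else 0)
      + (if j = (l + d) mod n then arr_coeff ?y l * (- (gam l * inverse lam * mu l)) else 0))"
    by (rule sum.cong) (use rotate_ne[OF j] in \<open>auto simp: arr_coeff_X_arr j\<close>)
  also have "\<dots> = (\<Sum>l<n. if j = l then arr_coeff ?y l * gam ((l + 1) mod n) else 0)
      + (\<Sum>l<n. if j = (l + d) mod n then arr_coeff ?y l * (- (gam l * inverse lam * mu l)) else 0)"
    by (rule sum.distrib)
  also have "(\<Sum>l<n. if j = l then arr_coeff ?y l * gam ((l + 1) mod n) else 0) = arr_coeff ?y j * gam ((j + 1) mod n)"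
    using j by simp
  also have "(\<Sum>l<n. if j = (l + d) mod n then arr_coeff ?y l * (- (gam l * inverse lam * mu l)) else 0)
      = arr_coeff ?y ((j + n - d) mod n) * (- (gam ((j + n - d) mod n) * inverse lam * mu ((j + n - d) mod n)))"
    by (rule sum_rotate_preimage[OF j])
  finally show ?thesis by (simp add: algebra_simps)
qed

lemma arrs_coeff_X_power_recurrence: assumes H: "n \<noteq> 4 \<or> d \<noteq> 2" and i: "i < n" and j: "j < n"
  shows "arrs_coeff ((X ^^ Suc k) (arrs n i)) j = gam j * arrs_coeff ((X ^^ k) (arrs n i)) j
     + (- (gam (((j + n - d) mod n + 1) mod n) * inverse lam * mus ((j + n - d) mod n))) * arrs_coeff ((X ^^ k) (arrs n i)) ((j + n - d) mod n)"
proof -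
  let ?y = "(X ^^ k) (arrs n i)"
  have s1: "(\<Sum>l<n. arr_coeff ?y l * arrs_coeff (X (arr l)) j) = 0"
  proof (cases "d = n - 2")
    case True
    then have "d \<noteq> 2" using H n_ge by auto
    then show ?thesis using arr_coeff_X_power_arrs[OF i] by simp
  next
    case False
    then show ?thesis using arrs_coeff_X_arr[OF _ j] by simp
  qed
  have "arrs_coeff ((X ^^ Suc k) (arrs n i)) j = (\<Sum>l<n. arrs_coeff ?y l * arrs_coeff (X (arrs n l)) j)"
    using arrs_coeff_X[OF X_power_span_VA[OF arrs_span_VA[OF i]]] s1 by simp
  also have "\<dots> = (\<Sum>l<n. (if j = l then arrs_coeff ?y l * gam l else 0)
      + (if j = (l + d) mod n then arrs_coeff ?y l * (- (gam ((l + 1) mod n) * inverse lam * mus l)) else 0))"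
    by (rule sum.cong) (use rotate_ne[OF j] in \<open>auto simp: arrs_coeff_X_arrs j\<close>)
  also have "\<dots> = (\<Sum>l<n. if j = l then arrs_coeff ?y l * gam l else 0)
      + (\<Sum>l<n. if j = (l + d) mod n then arrs_coeff ?y l * (- (gam ((l + 1) mod n) * inverse lam * mus l)) else 0)"
    by (rule sum.distrib)
  also have "(\<Sum>l<n. if j = l then arrs_coeff ?y l * gam l else 0) = arrs_coeff ?y j * gam j"
    using j by simp
  also have "(\<Sum>l<n. if j = (l + d) mod n then arrs_coeff ?y l * (- (gam ((l + 1) mod n) * inverse lam * mus l)) else 0)
      = arrs_coeff ?y ((j + n - d) mod n) * (- (gam (((j + n - d) mod n + 1) mod n) * inverse lam * mus ((j + n - d) mod n)))"
    by (rule sum_rotate_preimage[OF j])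
  finally show ?thesis by (simp add: algebra_simps)
qed

lemma inverse_lam_root: "inverse lam ^ r = 1" using lam_root by (simp add: power_inverse)
lemma inverse_lam_primitive: "\<forall>k. 0 < k \<and> k < r \<longrightarrow> inverse lam ^ k \<noteq> 1"
  using lam_prim by (simp add: power_inverse)

lemma prod_orbit_signs:
  "(\<Prod>l<r. - (inverse lam ^ l * g * inverse lam * x l)) = - (g ^ r * (\<Prod>l<r. x l))"
proof -
  have "(\<Prod>l<r. - (inverse lam ^ l * g * inverse lam * x l)) = (\<Prod>l<r. (- (inverse lam ^ l)) * ((inverse lam * g) * x l))"
    by (rule prod.cong) (auto simp: algebra_simps)
  also have "\<dots> = (\<Prod>l<r. - (inverse lam ^ l)) * (\<Prod>l<r. (inverse lam * g) * x l)"
    by (rule prod.distrib)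
  also have "(\<Prod>l<r. - (inverse lam ^ l)) = -1"
    by (rule prod_neg_powers_primitive_root) (use r_gt inverse_lam_root inverse_lam_primitive in auto)
  also have "(\<Prod>l<r. (inverse lam * g) * x l) = (\<Prod>l<r. inverse lam * g) * (\<Prod>l<r. x l)"
    by (rule prod.distrib)
  also have "(\<Prod>l<r. inverse lam * g) = (inverse lam * g) ^ r" by simp
  also have "\<dots> = g ^ r" using inverse_lam_root by (simp add: power_mult_distrib)
  finally show ?thesis by simp
qed

lemma gam_Suc_power: assumes H: "n \<noteq> 4 \<or> d \<noteq> 2" and i: "i < n"
  shows "gam ((i + 1) mod n) ^ r = zeta n d mu i * gam i ^ r"
proof -
  let ?c = "\<lambda>k j. arr_coeff ((X ^^ k) (arr i)) j"
  have rec: "\<And>k j. j < n \<Longrightarrow> ?c (Suc k) j = gam ((j + 1) mod n) * ?c k j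
      + (- (gam ((j + n - d) mod n) * inverse lam * mu ((j + n - d) mod n))) * ?c k ((j + n - d) mod n)"
    using arr_coeff_X_power_recurrence[OF H i] by blast
  have init: "\<And>j. j < n \<Longrightarrow> ?c 0 j = (if j = i then 1 else 0)"
    by (simp add: arr_coeff_def arr_apply)
  interpret orbit_recurrence n d i ?c "\<lambda>j. gam ((j + 1) mod n)" "\<lambda>j. - (gam j * inverse lam * mu j)"
    by unfold_locales (fact n_pos d_le_n i rec init)+
  note CF = value_period
  have "?c r i = 0" using X_nilpotent[OF arr_PA[OF i]] by (simp add: arr_coeff_def)
  then have "0 = gam ((i + 1) mod n) ^ r + (\<Prod>l<r. - (gam ((i + l * d) mod n) * inverse lam * mu ((i + l * d) mod n)))"
    using CF r_eq_kappa by simp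
  also have "(\<Prod>l<r. - (gam ((i + l * d) mod n) * inverse lam * mu ((i + l * d) mod n)))
      = (\<Prod>l<r. - (inverse lam ^ l * gam i * inverse lam * mu ((i + l * d) mod n)))"
    using gam_orbit[OF i] by simp
  also have "\<dots> = - (gam i ^ r * (\<Prod>l<r. mu ((i + l * d) mod n)))" by (rule prod_orbit_signs)
  finally have "gam ((i + 1) mod n) ^ r = gam i ^ r * (\<Prod>l<r. mu ((i + l * d) mod n))"
    by (simp add: eq_neg_iff_add_eq_0 add.commute)
  then show ?thesis by (simp add: zeta_eq_prod_r mult.commute)
qed

lemma gam_power_zeta_star: assumes H: "n \<noteq> 4 \<or> d \<noteq> 2" and i: "i < n"
  shows "gam i ^ r = zeta n d mus i * gam ((i + 1) mod n) ^ r"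
proof -
  let ?c = "\<lambda>k j. arrs_coeff ((X ^^ k) (arrs n i)) j"
  have rec: "\<And>k j. j < n \<Longrightarrow> ?c (Suc k) j = gam j * ?c k j
      + (- (gam (((j + n - d) mod n + 1) mod n) * inverse lam * mus ((j + n - d) mod n))) * ?c k ((j + n - d) mod n)"
    using arrs_coeff_X_power_recurrence[OF H i] by blast
  have init: "\<And>j. j < n \<Longrightarrow> ?c 0 j = (if j = i then 1 else 0)"
    by (simp add: arrs_coeff_def arrs_apply)
  interpret orbit_recurrence n d i ?c gam "\<lambda>j. - (gam ((j + 1) mod n) * inverse lam * mus j)"
    by unfold_locales (fact n_pos d_le_n i rec init)+
  note CF = value_period
  have "?c r i = 0" using X_nilpotent[OF arrs_PA[OF i]] by (simp add: arrs_coeff_def)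
  then have "0 = gam i ^ r + (\<Prod>l<r. - (gam (((i + l * d) mod n + 1) mod n) * inverse lam * mus ((i + l * d) mod n)))"
    using CF r_eq_kappa by simp
  also have "(\<Prod>l<r. - (gam (((i + l * d) mod n + 1) mod n) * inverse lam * mus ((i + l * d) mod n)))
      = (\<Prod>l<r. - (inverse lam ^ l * gam ((i + 1) mod n) * inverse lam * mus ((i + l * d) mod n)))"
  proof (rule prod.cong)
    fix l
    have "((i + l * d) mod n + 1) mod n = ((i + 1) mod n + l * d) mod n" by (simp add: mod_simps ac_simps)
    then show "- (gam (((i + l * d) mod n + 1) mod n) * inverse lam * mus ((i + l * d) mod n))
      = - (inverse lam ^ l * gam ((i + 1) mod n) * inverse lam * mus ((i + l * d) mod n))"
      using gam_orbit[of "(i + 1) mod n" l] n_pos by simp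
  qed simp
  also have "\<dots> = - (gam ((i + 1) mod n) ^ r * (\<Prod>l<r. mus ((i + l * d) mod n)))" by (rule prod_orbit_signs)
  finally have "gam i ^ r = gam ((i + 1) mod n) ^ r * (\<Prod>l<r. mus ((i + l * d) mod n))"
    by (simp add: eq_neg_iff_add_eq_0 add.commute)
  then show ?thesis by (simp add: zeta_eq_prod_r mult.commute)
qed


lemma zeta_nz: "i < n \<Longrightarrow> zeta n d mu i \<noteq> 0"
  unfolding zeta_def using mu_nz n_pos by (simp add: prod_zero_iff)
lemma zeta_star_nz: "i < n \<Longrightarrow> zeta n d mus i \<noteq> 0"
  unfolding zeta_def using mus_nz n_pos by (simp add: prod_zero_iff)

lemma gam_nz_all: assumes H: "n \<noteq> 4 \<or> d \<noteq> 2" and i: "i < n" shows "gam i \<noteq> 0"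
proof -
  obtain j0 where j0: "j0 < n" "gam j0 \<noteq> 0" using gam_nz by blast
  have "gam ((j0 + t) mod n) \<noteq> 0" for t
  proof (induction t)
    case 0 then show ?case using j0 by simp
  next
    case (Suc t)
    let ?i = "(j0 + t) mod n"
    have ii: "?i < n" using n_pos by simp
    have "(j0 + Suc t) mod n = (?i + 1) mod n" by (simp add: mod_simps)
    moreover have "gam ((?i + 1) mod n) ^ r \<noteq> 0"
      using gam_Suc_power[OF H ii] zeta_nz[OF ii] Suc by simp
    then have "gam ((?i + 1) mod n) \<noteq> 0" using r_gt by auto
    ultimately show ?case by simp
  qed
  from this[of "i + n - j0"] show ?thesis using j0 i by simp
qed

lemma zeta_inv: assumes H: "n \<noteq> 4 \<or> d \<noteq> 2" and i: "i < n"
  shows "zeta n d mus i = inverse (zeta n d mu i)"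
proof -
  have B: "gam i ^ r \<noteq> 0" using gam_nz_all[OF H i] by simp
  have "gam i ^ r = (zeta n d mus i * zeta n d mu i) * gam i ^ r"
    using gam_Suc_power[OF H i] gam_power_zeta_star[OF H i] by (simp add: mult.assoc)
  then have "1 * gam i ^ r = (zeta n d mus i * zeta n d mu i) * gam i ^ r" by simp
  then have "zeta n d mus i * zeta n d mu i = 1" using B mult_right_cancel by metis
  then show ?thesis using zeta_nz[OF i] by (simp add: field_simps)
qed

lemma gam_Suc_power_zeta_star: assumes H: "n \<noteq> 4 \<or> d \<noteq> 2" and i: "i < n"
  shows "gam ((i + 1) mod n) ^ r = inverse (zeta n d mus i) * gam i ^ r"
  using gam_power_zeta_star[OF H i] zeta_star_nz[OF i] by (simp add: field_simps)

lemma gcd_less_n: "gcd n d < n"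
proof -
  have "gcd n d \<le> d" using d_pos by (simp add: gcd_le2_nat)
  then show ?thesis using d_less by simp
qed

lemma gam_gcd_power: "gam (gcd n d) ^ r = gam 0 ^ r"
proof -
  obtain x y where xy: "d * x = n * y + gcd d n" using bezout_nat[of d n] d_pos by auto
  have "(0 + x * d) mod n = gcd n d"
  proof -
    have "(x * d) mod n = (n * y + gcd n d) mod n" using xy by (simp add: mult.commute gcd.commute)
    also have "\<dots> = gcd n d" using gcd_less_n by simp
    finally show ?thesis by simp
  qed
  then have "gam (gcd n d) = inverse lam ^ x * gam 0" using gam_orbit[of 0 x] n_pos by simp
  then have "gam (gcd n d) ^ r = (inverse lam ^ r) ^ x * gam 0 ^ r"
    by (simp add: power_mult_distrib power_mult[symmetric] mult.commute)
  then show ?thesis using inverse_lam_root by simp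
qed

lemma prod_mu_eq_1: assumes H: "n \<noteq> 4 \<or> d \<noteq> 2" shows "(\<Prod>i<n. mu i) = 1"
proof -
  let ?g = "gcd n d"
  let ?rho = "\<lambda>i. gam i ^ r"
  have rnz: "?rho i \<noteq> 0" if "i < n" for i using gam_nz_all[OF H that] by simp
  have tel: "t \<le> ?g \<Longrightarrow> (\<Prod>i<t. zeta n d mu i) = ?rho t / ?rho 0" for t
  proof (induction t)
    case 0 then show ?case using rnz n_pos by simp
  next
    case (Suc t)
    have tn: "t < n" "Suc t < n" using Suc.prems gcd_less_n by auto
    have z: "zeta n d mu t = ?rho (Suc t) / ?rho t"
      using gam_Suc_power[OF H tn(1)] tn rnz[OF tn(1)] by (simp add: field_simps)
    have "(\<Prod>i<Suc t. zeta n d mu i) = (\<Prod>i<t. zeta n d mu i) * zeta n d mu t" by simp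
    also have "\<dots> = ?rho t / ?rho 0 * (?rho (Suc t) / ?rho t)" using Suc z by simp
    also have "\<dots> = ?rho (Suc t) / ?rho 0" using rnz[OF tn(1)] by (simp add: field_simps)
    finally show ?case .
  qed
  have "(\<Prod>i<n. mu i) = (\<Prod>i<?g. zeta n d mu i)" by (rule prod_eq_prod_zeta[OF n_pos])
  also have "\<dots> = ?rho ?g / ?rho 0" using tel by simp
  also have "\<dots> = 1" using gam_gcd_power rnz[OF n_pos] by simp
  finally show ?thesis .
qed

lemma prod_mus_eq_1: assumes H: "n \<noteq> 4 \<or> d \<noteq> 2" shows "(\<Prod>i<n. mus i) = 1"
proof -
  let ?g = "gcd n d"
  have "(\<Prod>i<n. mus i) = (\<Prod>i<?g. zeta n d mus i)" by (rule prod_eq_prod_zeta[OF n_pos])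
  also have "\<dots> = (\<Prod>i<?g. inverse (zeta n d mu i))"
    by (rule prod.cong) (use zeta_inv[OF H] gcd_less_n in auto)
  also have "\<dots> = inverse (\<Prod>i<?g. zeta n d mu i)"
    using prod_inversef[of "zeta n d mu" "{..<?g}"] by (simp add: comp_def)
  also have "(\<Prod>i<?g. zeta n d mu i) = (\<Prod>i<n. mu i)" by (rule prod_eq_prod_zeta[OF n_pos, symmetric])
  finally show ?thesis using prod_mu_eq_1[OF H] by simp
qed


lemma funpow_G_linear: "pa_linear n (G ^^ k)"
proof (induction k)
  case 0
  show ?case by unfold_locales auto
next
  case (Suc k)
  interpret K: pa_linear n "G ^^ k" by (rule Suc)
  show ?case
  proof unfold_locales
    show "\<forall>f\<in>PA n. (G ^^ Suc k) f \<in> PA n" using K.map_closed G_lin.map_closed by simp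
    show "\<forall>f\<in>PA n. \<forall>h\<in>PA n. (G ^^ Suc k) (\<lambda>p. f p + h p) = (\<lambda>p. (G ^^ Suc k) f p + (G ^^ Suc k) h p)"
      using K.map_add G_lin.map_add K.map_closed by simp
    show "\<forall>f\<in>PA n. \<forall>c. (G ^^ Suc k) (\<lambda>p. c * f p) = (\<lambda>p. c * (G ^^ Suc k) f p)"
      using K.map_scale G_lin.map_scale K.map_closed by simp
  qed
qed

lemma funpow_G_mult: "f \<in> PA n \<Longrightarrow> h \<in> PA n \<Longrightarrow> (G ^^ k) (pmul n f h) = pmul n ((G ^^ k) f) ((G ^^ k) h)"
proof (induction k)
  case 0 then show ?case by simp
next
  case (Suc k)
  interpret K: pa_linear n "G ^^ k" by (rule funpow_G_linear)
  show ?case using Suc G_mult[OF K.map_closed[OF Suc.prems(1)] K.map_closed[OF Suc.prems(2)]] by simp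
qed

lemma funpow_G_vtx: "i < n \<Longrightarrow> (G ^^ k) (vtx i) = vtx ((i + k * d) mod n)"
proof (induction k)
  case 0 then show ?case by simp
next
  case (Suc k)
  have "(G ^^ Suc k) (vtx i) = G (vtx ((i + k * d) mod n))" using Suc by simp
  also have "\<dots> = vtx (((i + k * d) mod n + d) mod n)" using G_vtx n_pos by simp
  finally show ?case by (simp only: orbit_Suc)
qed

lemma funpow_G_arr: "i < n \<Longrightarrow> (G ^^ k) (arr i) = (\<lambda>p. (\<Prod>l<k. mu ((i + l * d) mod n)) * arr ((i + k * d) mod n) p)"
proof (induction k)
  case 0 then show ?case by simp
next
  case (Suc k)
  let ?j = "(i + k * d) mod n"
  have j: "?j < n" using n_pos by simp
  have "(G ^^ Suc k) (arr i) = G (\<lambda>p. (\<Prod>l<k. mu ((i + l * d) mod n)) * arr ?j p)" using Suc by simp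
  also have "\<dots> = (\<lambda>p. (\<Prod>l<k. mu ((i + l * d) mod n)) * G (arr ?j) p)" by (rule G_lin.map_scale[OF arr_PA[OF j]])
  also have "\<dots> = (\<lambda>p. (\<Prod>l<k. mu ((i + l * d) mod n)) * (mu ?j * arr ((?j + d) mod n) p))" using G_arr j by simp
  finally show ?case by (simp only: orbit_Suc[symmetric]) (simp add: mult.assoc)
qed

lemma funpow_G_arrs: "i < n \<Longrightarrow> (G ^^ k) (arrs n i) = (\<lambda>p. (\<Prod>l<k. mus ((i + l * d) mod n)) * arrs n ((i + k * d) mod n) p)"
proof (induction k)
  case 0 then show ?case by simp
next
  case (Suc k)
  let ?j = "(i + k * d) mod n"
  have j: "?j < n" using n_pos by simp
  have "(G ^^ Suc k) (arrs n i) = G (\<lambda>p. (\<Prod>l<k. mus ((i + l * d) mod n)) * arrs n ?j p)" using Suc by simp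
  also have "\<dots> = (\<lambda>p. (\<Prod>l<k. mus ((i + l * d) mod n)) * G (arrs n ?j) p)" by (rule G_lin.map_scale[OF arrs_PA[OF j]])
  also have "\<dots> = (\<lambda>p. (\<Prod>l<k. mus ((i + l * d) mod n)) * (mus ?j * arrs n ((?j + d) mod n) p))" using G_arrs j by simp
  finally show ?case by (simp only: orbit_Suc[symmetric]) (simp add: mult.assoc)
qed

context
  assumes H: "n \<noteq> 4 \<or> d \<noteq> 2" and g1: "gcd n d = 1"
begin

lemma kappa_eq_n: "kappa n d = n" unfolding kappa_def using g1 by simp
lemma r_eq_n: "r = n" using r_eq_kappa kappa_eq_n by simp

lemma zeta_eq_1: "i < n \<Longrightarrow> zeta n d mu i = 1 \<and> zeta n d mus i = 1"
  using prod_eq_prod_zeta_from[OF n_pos, of mu d i] prod_eq_prod_zeta_from[OF n_pos, of mus d i] prod_mu_eq_1[OF H] prod_mus_eq_1[OF H] g1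
  by simp

lemma funpow_n_G_vtx: "i < n \<Longrightarrow> (G ^^ n) (vtx i) = vtx i"
  using funpow_G_vtx[of i n] orbit_period[OF n_pos, of i d] kappa_eq_n by simp
lemma funpow_n_G_arr: "i < n \<Longrightarrow> (G ^^ n) (arr i) = arr i"
  using funpow_G_arr[of i n] orbit_period[OF n_pos, of i d] kappa_eq_n zeta_eq_1 unfolding zeta_def by simp
lemma funpow_n_G_arrs: "i < n \<Longrightarrow> (G ^^ n) (arrs n i) = arrs n i"
  using funpow_G_arrs[of i n] orbit_period[OF n_pos, of i d] kappa_eq_n zeta_eq_1 unfolding zeta_def by simp

lemma funpow_n_G_pbas: "v < n \<Longrightarrow> valid_from n v as \<Longrightarrow> (G ^^ n) (pbas (v, as)) = pbas (v, as)"
proof (induction as arbitrary: v)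
  case Nil
  then show ?case using funpow_n_G_vtx by (simp add: vtx_def)
next
  case (Cons a rest)
  obtain i b where a: "a = (i, b)" by (cases a)
  let ?w = "endp n v [a]"
  have i: "i < n" using Cons.prems a by simp
  have w: "?w < n" using n_pos i a by auto
  have vr: "valid_from n ?w rest" using Cons.prems a by (auto split: if_splits)
  have first: "pbas (v, [a]) \<in> PA n" "(G ^^ n) (pbas (v, [a])) = pbas (v, [a])"
  proof -
    show "(G ^^ n) (pbas (v, [a])) = pbas (v, [a])"
    proof (cases b)
      case True
      then have "(pbas (v, [a]) :: qpath \<Rightarrow> 'k) = arr i" using Cons.prems a by (simp add: arr_def)
      then show ?thesis using funpow_n_G_arr[OF i] by simp
    next
      case False
      then have "(pbas (v, [a]) :: qpath \<Rightarrow> 'k) = arrs n i" using Cons.prems a by (simp add: arrs_def)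
      then show ?thesis using funpow_n_G_arrs[OF i] by simp
    qed
    show "pbas (v, [a]) \<in> PA n" using Cons.prems a by (intro pbas_PA) (auto simp: valid_path_def)
  qed
  have second: "pbas (?w, rest) \<in> PA n" using w vr by (intro pbas_PA) (simp add: valid_path_def)
  have "(G ^^ n) (pbas (v, a # rest)) = (G ^^ n) (pmul n (pbas (v, [a])) (pbas (?w, rest)))"
    by (simp add: pbas_cons[of v a rest n])
  also have "\<dots> = pmul n (pbas (v, [a])) (pbas (?w, rest))"
    using funpow_G_mult[OF first(1) second] first(2) Cons.IH[OF w vr] by simp
  also have "\<dots> = pbas (v, a # rest)" by (simp add: pbas_cons[of v a rest n])
  finally show ?case .
qed

lemma funpow_n_G_id: assumes f: "f \<in> PA n" shows "(G ^^ n) f = f"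
proof -
  interpret Gn: pa_linear n "G ^^ n" by (rule funpow_G_linear)
  have "(G ^^ n) f = (\<lambda>q. \<Sum>p\<in>{p. f p \<noteq> 0}. f p * (G ^^ n) (pbas p) q)" by (rule Gn.map_basis_expansion[OF f])
  also have "\<dots> = (\<lambda>q. \<Sum>p\<in>{p. f p \<noteq> 0}. f p * pbas p q)"
  proof (intro ext sum.cong refl)
    fix q p assume "p \<in> {p. f p \<noteq> 0}"
    then have "valid_path n p" using f unfolding PA_def by blast
    then show "f p * (G ^^ n) (pbas p) q = f p * pbas p q"
      using funpow_n_G_pbas[of "fst p" "snd p"] by (simp add: valid_path_def)
  qed
  also have "\<dots> = f" using PA_basis_expansion[OF f] by simp
  finally show ?thesis .
qed

lemma funpow_G_mod: assumes f: "f \<in> PA n" shows "(G ^^ a) f = (G ^^ (a mod n)) f"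
proof -
  have "(G ^^ (n * q)) f = f" for q
  proof (induction q)
    case 0 then show ?case by simp
  next
    case (Suc q)
    have "(G ^^ (n * Suc q)) f = (G ^^ n) ((G ^^ (n * q)) f)" by (simp add: funpow_add)
    then show ?case using Suc funpow_n_G_id[OF f] by simp
  qed
  moreover have "(G ^^ a) f = (G ^^ (a mod n)) ((G ^^ (n * (a div n))) f)"
    by (metis div_mult_mod_eq funpow_add o_apply add.commute mult.commute)
  ultimately show ?thesis by simp
qed


end

end

section \<open>The reduction of the Taft algebra modulo g^n - 1\<close>

lemma finite_TB: "finite (TB m r)"
  unfolding TB_def by simp

lemma mod_add_eq_iff:
  fixes m :: nat
  assumes x: "x < m" and z: "z < m" and e: "e < m"
  shows "((x + e) mod m = z) = (x = (z + m - e) mod m)"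
proof
  assume h: "(x + e) mod m = z"
  have "(z + m - e) mod m = ((x + e) mod m + (m - e)) mod m" using h e by simp
  also have "\<dots> = (x + e + (m - e)) mod m" by (rule mod_add_left_eq)
  also have "x + e + (m - e) = x + m" using e by simp
  finally show "x = (z + m - e) mod m" using x by simp
next
  assume h: "x = (z + m - e) mod m"
  have "(x + e) mod m = ((z + m - e) mod m + e) mod m" using h by simp
  also have "\<dots> = (z + m - e + e) mod m" by (rule mod_add_left_eq)
  also have "z + m - e + e = z + m" using e by simp
  finally show "(x + e) mod m = z" using z by simp
qed

lemma TC_add: "u \<in> TC m n \<Longrightarrow> v \<in> TC m n \<Longrightarrow> (\<lambda>z. u z + v z) \<in> (TC m n :: (nat \<times> nat \<Rightarrow> 'k::monoid_add) set)"
proof -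
  assume u: "u \<in> TC m n" and v: "v \<in> TC m n"
  have "z \<in> TB m n" if "u z + v z \<noteq> 0" for z
  proof -
    have "u z \<noteq> 0 \<or> v z \<noteq> 0" using that by auto
    then show ?thesis using u v unfolding TC_def by blast
  qed
  then show ?thesis unfolding TC_def by blast
qed

lemma sum_TB: "(\<Sum>al\<in>TB m n. g al) = (\<Sum>a\<in>{0..<m}. \<Sum>b\<in>{0..<n}. g (a, b))"
  unfolding TB_def by (simp add: sum.cartesian_product)

lemma tdelta_TC: "al \<in> TB m n \<Longrightarrow> tdelta al \<in> TC m n"
  unfolding TC_def tdelta_def by auto

lemma ITTI_finite_sum:
  assumes W: "finite W"
    and mem: "\<And>x. x \<in> W \<Longrightarrow> us x \<in> I \<and> ts x \<in> TC m r \<and> vs x \<in> TC m r \<and> ws x \<in> I"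
    and Z: "Z = (\<lambda>w. \<Sum>x\<in>W. tens (us x) (ts x) w + tens (vs x) (ws x) w)"
  shows "Z \<in> ITTI m r I"
proof -
  obtain h where h: "bij_betw h {..<card W} W"
    using ex_bij_betw_nat_finite[OF W] by (auto simp: lessThan_atLeast0)
  then have hW: "h k \<in> W" if "k < card W" for k
    using that by (auto simp: bij_betw_def)
  have eq: "Z = (\<lambda>w. \<Sum>k<card W. tens (us (h k)) (ts (h k)) w + tens (vs (h k)) (ws (h k)) w)"
  proof
    fix w
    show "Z w = (\<Sum>k<card W. tens (us (h k)) (ts (h k)) w + tens (vs (h k)) (ws (h k)) w)"
      using sum.reindex_bij_betw[OF h, of "\<lambda>x. tens (us x) (ts x) w + tens (vs x) (ws x) w"] Z
      by simp
  qed
  show ?thesis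
    unfolding ITTI_def
    by (rule CollectI, rule exI[where x="card W"], rule exI[where x="\<lambda>k. us (h k)"],
        rule exI[where x="\<lambda>k. ts (h k)"], rule exI[where x="\<lambda>k. vs (h k)"],
        rule exI[where x="\<lambda>k. ws (h k)"]) (use mem hW eq in blast)
qed

locale taft_reduction =
  fixes lam :: "'k::field" and m n :: nat
  assumes n_pos: "0 < n" and n_dvd_m: "n dvd m" and lam_power_n: "lam ^ n = 1" and n_less_m: "n < m"
begin

lemma m_pos: "0 < m" using n_pos n_less_m by simp

definition residue_class :: "nat \<Rightarrow> nat set" where "residue_class c = {a. a < m \<and> a mod n = c mod n}"

definition reduction_kernel :: "(nat \<times> nat \<Rightarrow> 'k) set" where
  "reduction_kernel = {u \<in> TC m n. \<forall>c b. (\<Sum>a\<in>residue_class c. u (a, b)) = 0}"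

lemma finite_residue_class: "finite (residue_class c)" unfolding residue_class_def by simp

lemma residue_class_cong: "c mod n = c' mod n \<Longrightarrow> residue_class c = residue_class c'" unfolding residue_class_def by simp

lemma reduction_kernel_annihilates:
  assumes u: "u \<in> reduction_kernel"
    and F: "\<And>a a' b. a < m \<Longrightarrow> a' < m \<Longrightarrow> a mod n = a' mod n \<Longrightarrow> F (a, b) = F (a', b)"
  shows "(\<Sum>al\<in>TB m n. u al * F al) = 0"
proof -
  have "(\<Sum>al\<in>TB m n. u al * F al) = (\<Sum>a\<in>{0..<m}. \<Sum>b\<in>{0..<n}. u (a, b) * F (a, b))"
    unfolding TB_def by (simp add: sum.cartesian_product)
  also have "\<dots> = (\<Sum>b\<in>{0..<n}. \<Sum>a\<in>{0..<m}. u (a, b) * F (a, b))" by (rule sum.swap)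
  also have "\<dots> = 0"
  proof (rule sum.neutral, rule ballI)
    fix b assume b: "b \<in> {0..<n}"
    have "(\<Sum>a\<in>{0..<m}. u (a, b) * F (a, b)) = (\<Sum>c\<in>{..<n}. \<Sum>a\<in>{a \<in> {0..<m}. a mod n = c}. u (a, b) * F (a, b))"
      by (rule sum.group[symmetric]) (use n_pos in auto)
    also have "\<dots> = (\<Sum>c\<in>{..<n}. F (c, b) * (\<Sum>a\<in>residue_class c. u (a, b)))"
    proof (rule sum.cong[OF refl])
      fix c assume c: "c \<in> {..<n}"
      have cm: "c < m" using c n_less_m by simp
      have S: "{a \<in> {0..<m}. a mod n = c} = residue_class c" using c unfolding residue_class_def by auto
      show "(\<Sum>a\<in>{a \<in> {0..<m}. a mod n = c}. u (a, b) * F (a, b)) = F (c, b) * (\<Sum>a\<in>residue_class c. u (a, b))"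
        unfolding S sum_distrib_left
        by (rule sum.cong[OF refl]) (use F[OF _ cm] c in \<open>auto simp: residue_class_def mult.commute\<close>)
    qed
    also have "\<dots> = 0" using u unfolding reduction_kernel_def by simp
    finally show "(\<Sum>a\<in>{0..<m}. u (a, b) * F (a, b)) = 0" .
  qed
  finally show ?thesis .
qed

lemma reduction_kernel_zero: "(\<lambda>_. 0) \<in> reduction_kernel" unfolding reduction_kernel_def TC_def by simp

lemma reduction_kernel_add: "u \<in> reduction_kernel \<Longrightarrow> v \<in> reduction_kernel \<Longrightarrow> (\<lambda>z. u z + v z) \<in> reduction_kernel"
  unfolding reduction_kernel_def using TC_add by (auto simp: sum.distrib)

lemma reduction_kernel_subset: "reduction_kernel \<subseteq> TC m n" unfolding reduction_kernel_def by auto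

lemma reduction_kernel_scale: "u \<in> reduction_kernel \<Longrightarrow> (\<lambda>z. c * u z) \<in> reduction_kernel"
  unfolding reduction_kernel_def TC_def by (auto simp: sum_distrib_left[symmetric])

lemma reduction_kernel_counit: "u \<in> reduction_kernel \<Longrightarrow> teps m u = 0"
proof -
  assume u: "u \<in> reduction_kernel"
  have "teps m u = (\<Sum>al\<in>TB m n. u al * (if snd al = 0 then 1 else 0))"
  proof -
    have "(\<Sum>al\<in>TB m n. u al * (if snd al = 0 then 1 else 0)) = (\<Sum>a\<in>{0..<m}. \<Sum>b\<in>{0..<n}. u (a, b) * (if b = 0 then 1 else 0))"
      unfolding TB_def by (simp add: sum.cartesian_product case_prod_beta)
    also have "\<dots> = (\<Sum>a\<in>{0..<m}. u (a, 0))" using n_pos by (simp add: if_distrib cong: if_cong)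
    also have "\<dots> = teps m u" unfolding teps_def by (simp add: atLeast0LessThan)
    finally show ?thesis by simp
  qed
  also have "\<dots> = 0" by (rule reduction_kernel_annihilates[OF u]) simp
  finally show ?thesis .
qed

definition g_power_n_minus_1 :: "nat \<times> nat \<Rightarrow> 'k" where
  "g_power_n_minus_1 = (\<lambda>z. tdelta (n, 0) z - tdelta (0, 0) z)"

lemma g_power_n_minus_1_in_kernel: "g_power_n_minus_1 \<in> reduction_kernel"
proof -
  have "g_power_n_minus_1 \<in> TC m n" unfolding TC_def TB_def g_power_n_minus_1_def tdelta_def using n_less_m n_pos by auto
  moreover have "(\<Sum>a\<in>residue_class c. g_power_n_minus_1 (a, b)) = 0" for c b
  proof -
    have "(\<Sum>a\<in>residue_class c. g_power_n_minus_1 (a, b)) = (\<Sum>a\<in>residue_class c. if a = n \<and> b = 0 then 1 else 0) - (\<Sum>a\<in>residue_class c. if a = 0 \<and> b = 0 then 1 else 0)"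
      unfolding g_power_n_minus_1_def tdelta_def by (simp add: sum_subtractf)
    also have "\<dots> = 0"
      using n_less_m n_pos by (cases "b = 0") (auto simp: residue_class_def finite_residue_class)
    finally show ?thesis .
  qed
  ultimately show ?thesis unfolding reduction_kernel_def by simp
qed

lemma g_power_n_minus_1_nz: "g_power_n_minus_1 \<noteq> (\<lambda>_. 0)"
proof
  assume "g_power_n_minus_1 = (\<lambda>_. 0)"
  then have "g_power_n_minus_1 (n, 0) = 0" by simp
  then show False unfolding g_power_n_minus_1_def tdelta_def using n_pos by simp
qed

lemma tcoef_support: "tcoef lam m n al be z \<noteq> 0 \<Longrightarrow> z \<in> TB m n"
  unfolding tcoef_def TB_def using m_pos by (cases z) (auto split: if_splits)

lemma tmul_TC: "tmul lam m n u v \<in> TC m n"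
proof -
  have "z \<in> TB m n" if "tmul lam m n u v z \<noteq> 0" for z
  proof (rule ccontr)
    assume "z \<notin> TB m n"
    then have tz: "\<And>al be. tcoef lam m n al be z = 0" using tcoef_support by blast
    have "tmul lam m n u v z = 0" unfolding tmul_def by (simp add: tz)
    then show False using that by simp
  qed
  then show ?thesis unfolding TC_def by blast
qed

lemma lam_power_mod: "lam ^ k = lam ^ (k mod n)"
proof -
  have "lam ^ k = lam ^ (n * (k div n) + k mod n)" by simp
  also have "\<dots> = (lam ^ n) ^ (k div n) * lam ^ (k mod n)" by (simp only: power_add power_mult)
  finally have "lam ^ k = (lam ^ n) ^ (k div n) * lam ^ (k mod n)" .
  then show ?thesis using lam_power_n by simp
qed

definition residue_coeff :: "nat \<times> nat \<Rightarrow> nat \<times> nat \<Rightarrow> nat \<Rightarrow> nat \<Rightarrow> 'k" where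
  "residue_coeff al be c b = (if ((fst al + fst be) mod m) mod n = c mod n \<and> b = snd al + snd be \<and> b < n
      then inverse (lam ^ (snd al * fst be)) else 0)"

lemma sum_residue_class_tcoef: "(\<Sum>a\<in>residue_class c. tcoef lam m n al be (a, b)) = residue_coeff al be c b"
proof (cases "b = snd al + snd be \<and> b < n")
  case True
  have "(\<Sum>a\<in>residue_class c. tcoef lam m n al be (a, b)) = (\<Sum>a\<in>residue_class c. if a = (fst al + fst be) mod m then inverse (lam ^ (snd al * fst be)) else 0)"
    using True unfolding tcoef_def by simp
  also have "\<dots> = residue_coeff al be c b" using True m_pos unfolding residue_coeff_def by (simp add: finite_residue_class residue_class_def)
  finally show ?thesis .
next
  case False
  then have tz: "\<And>a. tcoef lam m n al be (a, b) = 0" unfolding tcoef_def by auto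
  have "\<not> (b = snd al + snd be \<and> b < n)" using False by simp
  then have "residue_coeff al be c b = 0" unfolding residue_coeff_def by (auto simp del: inverse_nonzero_iff_nonzero)
  then show ?thesis by (simp add: tz)
qed

lemma residue_coeff_right_cong: "a < m \<Longrightarrow> a' < m \<Longrightarrow> a mod n = a' mod n \<Longrightarrow> residue_coeff al (a, b') c b = residue_coeff al (a', b') c b"
proof -
  assume a: "a < m" "a' < m" "a mod n = a' mod n"
  have e1: "((fst al + a) mod m) mod n = ((fst al + a') mod m) mod n"
  proof -
    have "((fst al + a) mod m) mod n = (fst al + a) mod n" using n_dvd_m by (rule mod_mod_cancel)
    also have "\<dots> = (fst al + a mod n) mod n" by (rule mod_add_right_eq[symmetric])
    also have "\<dots> = (fst al + a' mod n) mod n" using a by simp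
    also have "\<dots> = (fst al + a') mod n" by (rule mod_add_right_eq)
    also have "\<dots> = ((fst al + a') mod m) mod n" using n_dvd_m by (rule mod_mod_cancel[symmetric])
    finally show ?thesis .
  qed
  have "(snd al * a) mod n = (snd al * (a mod n)) mod n" by (simp add: mod_mult_right_eq)
  also have "\<dots> = (snd al * (a' mod n)) mod n" using a by simp
  also have "\<dots> = (snd al * a') mod n" by (simp add: mod_mult_right_eq)
  finally have "(snd al * a) mod n = (snd al * a') mod n" .
  then have e2: "lam ^ (snd al * a) = lam ^ (snd al * a')" using lam_power_mod[of "snd al * a"] lam_power_mod[of "snd al * a'"] by simp
  show ?thesis unfolding residue_coeff_def using e1 e2 by simp
qed

lemma residue_coeff_left_cong: "a < m \<Longrightarrow> a' < m \<Longrightarrow> a mod n = a' mod n \<Longrightarrow> residue_coeff (a, b') be c b = residue_coeff (a', b') be c b"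
proof -
  assume a: "a < m" "a' < m" "a mod n = a' mod n"
  have e1: "((a + fst be) mod m) mod n = ((a' + fst be) mod m) mod n"
  proof -
    have "((a + fst be) mod m) mod n = (a + fst be) mod n" using n_dvd_m by (rule mod_mod_cancel)
    also have "\<dots> = (a mod n + fst be) mod n" by (rule mod_add_left_eq[symmetric])
    also have "\<dots> = (a' mod n + fst be) mod n" using a by simp
    also have "\<dots> = (a' + fst be) mod n" by (rule mod_add_left_eq)
    also have "\<dots> = ((a' + fst be) mod m) mod n" using n_dvd_m by (rule mod_mod_cancel[symmetric])
    finally show ?thesis .
  qed
  show ?thesis unfolding residue_coeff_def using e1 by simp
qed

lemma sum_residue_class_tmul: "(\<Sum>a\<in>residue_class c. tmul lam m n t u (a, b)) = (\<Sum>al\<in>TB m n. \<Sum>be\<in>TB m n. t al * u be * residue_coeff al be c b)"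
proof -
  have "(\<Sum>a\<in>residue_class c. tmul lam m n t u (a, b)) = (\<Sum>a\<in>residue_class c. \<Sum>al\<in>TB m n. \<Sum>be\<in>TB m n. t al * u be * tcoef lam m n al be (a, b))"
    unfolding tmul_def by simp
  also have "\<dots> = (\<Sum>al\<in>TB m n. \<Sum>a\<in>residue_class c. \<Sum>be\<in>TB m n. t al * u be * tcoef lam m n al be (a, b))"
    by (rule sum.swap)
  also have "\<dots> = (\<Sum>al\<in>TB m n. \<Sum>be\<in>TB m n. \<Sum>a\<in>residue_class c. t al * u be * tcoef lam m n al be (a, b))"
    by (rule sum.cong[OF refl], rule sum.swap)
  also have "\<dots> = (\<Sum>al\<in>TB m n. \<Sum>be\<in>TB m n. t al * u be * residue_coeff al be c b)"
    by (intro sum.cong refl) (simp only: sum_residue_class_tcoef[symmetric] sum_distrib_left)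
  finally show ?thesis .
qed

lemma tmul_reduction_kernel_right: assumes u: "u \<in> reduction_kernel" shows "tmul lam m n t u \<in> reduction_kernel"
proof -
  have "(\<Sum>a\<in>residue_class c. tmul lam m n t u (a, b)) = 0" for c b
  proof -
    have "(\<Sum>a\<in>residue_class c. tmul lam m n t u (a, b)) = (\<Sum>al\<in>TB m n. t al * (\<Sum>be\<in>TB m n. u be * residue_coeff al be c b))"
      unfolding sum_residue_class_tmul by (simp add: sum_distrib_left mult.assoc)
    also have "\<dots> = 0"
    proof (rule sum.neutral, rule ballI)
      fix al
      have "(\<Sum>be\<in>TB m n. u be * residue_coeff al be c b) = 0"
        by (rule reduction_kernel_annihilates[OF u]) (rule residue_coeff_right_cong)
      then show "t al * (\<Sum>be\<in>TB m n. u be * residue_coeff al be c b) = 0" by simp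
    qed
    finally show ?thesis .
  qed
  then show ?thesis unfolding reduction_kernel_def using tmul_TC by blast
qed

lemma tmul_reduction_kernel_left: assumes u: "u \<in> reduction_kernel" shows "tmul lam m n u t \<in> reduction_kernel"
proof -
  have "(\<Sum>a\<in>residue_class c. tmul lam m n u t (a, b)) = 0" for c b
  proof -
    have "(\<Sum>a\<in>residue_class c. tmul lam m n u t (a, b)) = (\<Sum>al\<in>TB m n. u al * (\<Sum>be\<in>TB m n. t be * residue_coeff al be c b))"
      unfolding sum_residue_class_tmul by (simp add: sum_distrib_left mult.assoc)
    also have "\<dots> = 0"
    proof (rule reduction_kernel_annihilates[OF u])
      fix a a' b' assume a: "a < m" "a' < m" "a mod n = a' mod n"
      show "(\<Sum>be\<in>TB m n. t be * residue_coeff (a, b') be c b) = (\<Sum>be\<in>TB m n. t be * residue_coeff (a', b') be c b)"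
        using residue_coeff_left_cong[OF a] by simp
    qed
    finally show ?thesis .
  qed
  then show ?thesis unfolding reduction_kernel_def using tmul_TC by blast
qed

lemma mod_diff_cong: assumes e: "e < m" "e' < m" "e mod n = e' mod n"
  shows "(c + m - e) mod n = (c + m - e') mod n"
proof -
  have k: "(m - e) mod n = (m - e') mod n"
  proof (cases "e \<le> e'")
    case True
    have "n dvd e' - e" using True e(3) mod_eq_dvd_iff_nat[of e e' n] by simp
    moreover have "(m - e) - (m - e') = e' - e" using True e by simp
    ultimately have "n dvd (m - e) - (m - e')" by simp
    then show ?thesis using True e mod_eq_dvd_iff_nat[of "m - e'" "m - e" n] by simp
  next
    case False
    have "n dvd e - e'" using False e(3) mod_eq_dvd_iff_nat[of e' e n] by simp
    moreover have "(m - e') - (m - e) = e - e'" using False e by simp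
    ultimately have "n dvd (m - e') - (m - e)" by simp
    then show ?thesis using False e mod_eq_dvd_iff_nat[of "m - e" "m - e'" n] by simp
  qed
  have "(c + m - e) mod n = (c + (m - e)) mod n" using e by simp
  also have "\<dots> = (c + (m - e) mod n) mod n" by (rule mod_add_right_eq[symmetric])
  also have "\<dots> = (c + (m - e') mod n) mod n" using k by simp
  also have "\<dots> = (c + (m - e')) mod n" by (rule mod_add_right_eq)
  also have "\<dots> = (c + m - e') mod n" using e by simp
  finally show ?thesis .
qed

lemma sum_residue_class_shift:
  assumes e: "e < m"
  shows "(\<Sum>a\<in>residue_class c. g ((a + m - e) mod m)) = (\<Sum>a\<in>residue_class (c + m - e). g a)"
proof (rule sum.reindex_bij_witness[where i="\<lambda>a. (a + e) mod m" and j="\<lambda>a. (a + m - e) mod m"])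
  fix a assume a: "a \<in> residue_class c"
  then show "((a + m - e) mod m + e) mod m = a"
    using e by (simp add: residue_class_def mod_add_left_eq)
  have "(a + (m - e)) mod n = (c + (m - e)) mod n"
    using a by (intro mod_add_cong) (simp_all add: residue_class_def)
  then show "(a + m - e) mod m \<in> residue_class (c + m - e)"
    using e n_dvd_m m_pos by (simp add: residue_class_def mod_mod_cancel)
next
  fix b assume b: "b \<in> residue_class (c + m - e)"
  have "((b + e) mod m + (m - e)) mod m = (b + e + (m - e)) mod m"
    by (rule mod_add_left_eq)
  then show "((b + e) mod m + m - e) mod m = b"
    using e b by (simp add: residue_class_def add_diff_assoc less_imp_le)
  have "(b + e) mod n = (c + m - e + e) mod n"
    using b by (intro mod_add_cong) (simp_all add: residue_class_def)
  also have "\<dots> = (c + m) mod n" using e by simp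
  finally show "(b + e) mod m \<in> residue_class c"
    using n_dvd_m m_pos by (auto simp: residue_class_def mod_mod_cancel)
qed simp

lemma tmul_tdelta: assumes al: "al \<in> TB m n" and be: "be \<in> TB m n"
  shows "tmul lam m n (tdelta al) (tdelta be) z = tcoef lam m n al be z"
proof -
  have "tmul lam m n (tdelta al) (tdelta be) z = (\<Sum>y\<in>TB m n. tdelta al al * tdelta be y * tcoef lam m n al y z)"
    unfolding tmul_def by (rule sum_eq_single[OF finite_TB al]) (simp add: tdelta_def)
  also have "\<dots> = tdelta al al * tdelta be be * tcoef lam m n al be z"
    by (rule sum_eq_single[OF finite_TB be]) (simp add: tdelta_def)
  finally show ?thesis by (simp add: tdelta_def)
qed

lemma tpow_g_inverse: "tpow lam m n (tdelta (m - 1, 0)) k = tdelta (((m - 1) * k) mod m, 0)"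
proof (induction k)
  case 0 then show ?case by simp
next
  case (Suc k)
  let ?e = "((m - 1) * k) mod m"
  have TB1: "(?e, 0) \<in> TB m n" "(m - 1, 0) \<in> TB m n" using m_pos n_pos by (auto simp: TB_def)
  have "((m - 1) * k) mod m + (m - 1) = ?e + (m - 1)" by simp
  have ee: "(?e + (m - 1)) mod m = ((m - 1) * Suc k) mod m"
  proof -
    have "(?e + (m - 1)) mod m = ((m - 1) * k + (m - 1)) mod m" by (rule mod_add_left_eq)
    also have "(m - 1) * k + (m - 1) = (m - 1) * Suc k" by simp
    finally show ?thesis .
  qed
  show ?case
  proof
    fix z
    have "tpow lam m n (tdelta (m - 1, 0)) (Suc k) z = tcoef lam m n (?e, 0) (m - 1, 0) z"
      using Suc tmul_tdelta[OF TB1] by simp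
    also have "\<dots> = tdelta (((m - 1) * Suc k) mod m, 0) z"
      unfolding tcoef_def tdelta_def using ee n_pos by (cases z) auto
    finally show "tpow lam m n (tdelta (m - 1, 0)) (Suc k) z = tdelta (((m - 1) * Suc k) mod m, 0) z" .
  qed
qed

lemma tmul_tdelta_right: assumes e: "e < m" and z: "z \<in> TB m n"
  shows "tmul lam m n V (tdelta (e, 0)) z = V ((fst z + m - e) mod m, snd z) * inverse (lam ^ (snd z * e))"
proof -
  have TBe: "(e, 0) \<in> TB m n" using e n_pos by (simp add: TB_def)
  have "tmul lam m n V (tdelta (e, 0)) z = (\<Sum>al\<in>TB m n. V al * tcoef lam m n al (e, 0) z)"
    unfolding tmul_def
  proof (rule sum.cong[OF refl])
    fix al
    show "(\<Sum>be\<in>TB m n. V al * tdelta (e, 0) be * tcoef lam m n al be z) = V al * tcoef lam m n al (e, 0) z"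
      by (subst sum_eq_single[OF finite_TB TBe]) (simp_all add: tdelta_def)
  qed
  also have "\<dots> = V ((fst z + m - e) mod m, snd z) * tcoef lam m n ((fst z + m - e) mod m, snd z) (e, 0) z"
  proof (rule sum_eq_single)
    show "((fst z + m - e) mod m, snd z) \<in> TB m n" using z m_pos by (auto simp: TB_def mem_Times_iff)
    show "\<forall>x\<in>TB m n. x \<noteq> ((fst z + m - e) mod m, snd z) \<longrightarrow> V x * tcoef lam m n x (e, 0) z = 0"
    proof (intro ballI impI)
      fix x assume x: "x \<in> TB m n" "x \<noteq> ((fst z + m - e) mod m, snd z)"
      have "tcoef lam m n x (e, 0) z = 0"
      proof (rule ccontr)
        assume "tcoef lam m n x (e, 0) z \<noteq> 0"
        then have h: "fst z = (fst x + e) mod m" "snd z = snd x" unfolding tcoef_def by (auto split: if_splits)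
        have "fst x = (fst z + m - e) mod m"
          using mod_add_eq_iff[of "fst x" m "fst z" e] x(1) z e h(1) by (simp add: TB_def mem_Times_iff)
        then show False using x(2) h(2) by (cases x) auto
      qed
      then show "V x * tcoef lam m n x (e, 0) z = 0" by simp
    qed
  qed (rule finite_TB)
  also have "tcoef lam m n ((fst z + m - e) mod m, snd z) (e, 0) z = inverse (lam ^ (snd z * e))"
  proof -
    have "((fst z + m - e) mod m + e) mod m = fst z"
      using mod_add_eq_iff[of "(fst z + m - e) mod m" m "fst z" e] z e m_pos by (simp add: TB_def mem_Times_iff)
    then show ?thesis unfolding tcoef_def using z by (simp add: TB_def mem_Times_iff)
  qed
  finally show ?thesis .
qed

text \<open>Since \<open>g ^ (m - 1) = g\<inverse>\<close>, \<open>g ^ inverse_exp a = g ^ (-a)\<close>.\<close>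

definition inverse_exp :: "nat \<Rightarrow> nat" where "inverse_exp a = ((m - 1) * a) mod m"

lemma inverse_exp_less: "inverse_exp a < m" unfolding inverse_exp_def using m_pos by simp

lemma inverse_exp_cong: "a mod n = a' mod n \<Longrightarrow> inverse_exp a mod n = inverse_exp a' mod n"
proof -
  assume h: "a mod n = a' mod n"
  have "inverse_exp a mod n = ((m - 1) * a) mod n" unfolding inverse_exp_def using n_dvd_m by (rule mod_mod_cancel)
  also have "\<dots> = ((m - 1) * (a mod n)) mod n" by (rule mod_mult_right_eq[symmetric])
  also have "\<dots> = ((m - 1) * (a' mod n)) mod n" using h by simp
  also have "\<dots> = ((m - 1) * a') mod n" by (rule mod_mult_right_eq)
  also have "\<dots> = inverse_exp a' mod n" unfolding inverse_exp_def using n_dvd_m by (rule mod_mod_cancel[symmetric])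
  finally show ?thesis .
qed

lemma lam_power_mult_cong: "e mod n = e' mod n \<Longrightarrow> lam ^ (b * e) = lam ^ (b * e')"
proof -
  assume h: "e mod n = e' mod n"
  have "(b * e) mod n = (b * (e mod n)) mod n" by (rule mod_mult_right_eq[symmetric])
  also have "\<dots> = (b * (e' mod n)) mod n" using h by simp
  also have "\<dots> = (b * e') mod n" by (rule mod_mult_right_eq)
  finally show ?thesis using lam_power_mod[of "b * e"] lam_power_mod[of "b * e'"] by simp
qed

lemma sum_residue_class_tmul_g_power:
  assumes e: "e < m"
  shows "(\<Sum>a\<in>residue_class c. tmul lam m n V (tdelta (e, 0)) (a, b)) =
    (if b < n then inverse (lam ^ (b * e)) * (\<Sum>a\<in>residue_class (c + m - e). V (a, b)) else 0)"
proof (cases "b < n")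
  case True
  have "(\<Sum>a\<in>residue_class c. tmul lam m n V (tdelta (e, 0)) (a, b))
      = (\<Sum>a\<in>residue_class c. V ((a + m - e) mod m, b) * inverse (lam ^ (b * e)))"
    by (rule sum.cong[OF refl]) (use True e in \<open>auto simp: residue_class_def TB_def tmul_tdelta_right\<close>)
  also have "\<dots> = inverse (lam ^ (b * e)) * (\<Sum>a\<in>residue_class c. V ((a + m - e) mod m, b))"
    by (simp add: sum_distrib_left mult.commute)
  also have "(\<Sum>a\<in>residue_class c. V ((a + m - e) mod m, b)) = (\<Sum>a\<in>residue_class (c + m - e). V (a, b))"
    by (rule sum_residue_class_shift[OF e])
  finally show ?thesis using True by simp
next
  case False
  then have "tmul lam m n V (tdelta (e, 0)) (a, b) = 0" for a
    using tmul_TC[of V "tdelta (e, 0)"] unfolding TC_def TB_def by auto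
  then show ?thesis using False by simp
qed

lemma tS_reduction_kernel:
  assumes u: "u \<in> reduction_kernel"
  shows "tS lam m n u \<in> reduction_kernel"
proof -
  let ?V = "tpow lam m n (\<lambda>y. - tmul lam m n (tdelta (0, 1)) (tdelta (m - 1, 0)) y)"
  have tS_eq: "tS lam m n u z =
      (\<Sum>al\<in>TB m n. u al * tmul lam m n (?V (snd al)) (tdelta (inverse_exp (fst al), 0)) z)" for z
    unfolding tS_def inverse_exp_def tpow_g_inverse by simp
  have "z \<in> TB m n" if "tS lam m n u z \<noteq> 0" for z
  proof (rule ccontr)
    assume "z \<notin> TB m n"
    then have "tmul lam m n V e z = 0" for V e
      using tmul_TC unfolding TC_def by blast
    then show False using that unfolding tS_eq by simp
  qed
  then have TC: "tS lam m n u \<in> TC m n" unfolding TC_def by blast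
  have "(\<Sum>a\<in>residue_class c. tS lam m n u (a, b)) = 0" for c b
  proof -
    have "(\<Sum>a\<in>residue_class c. tS lam m n u (a, b)) = (\<Sum>al\<in>TB m n. u al *
        (\<Sum>a\<in>residue_class c. tmul lam m n (?V (snd al)) (tdelta (inverse_exp (fst al), 0)) (a, b)))"
      unfolding tS_eq by (simp add: sum_distrib_left sum.swap[of _ "residue_class c"])
    also have "\<dots> = (\<Sum>al\<in>TB m n. u al *
        (if b < n then inverse (lam ^ (b * inverse_exp (fst al)))
           * (\<Sum>a\<in>residue_class (c + m - inverse_exp (fst al)). ?V (snd al) (a, b)) else 0))"
      by (simp only: sum_residue_class_tmul_g_power[OF inverse_exp_less])
    also have "\<dots> = 0"
    proof (rule reduction_kernel_annihilates[OF u])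
      fix a a' b' assume a: "a < m" "a' < m" "a mod n = a' mod n"
      have e: "inverse_exp a mod n = inverse_exp a' mod n" using inverse_exp_cong[OF a(3)] .
      have "residue_class (c + m - inverse_exp a) = residue_class (c + m - inverse_exp a')"
        by (rule residue_class_cong, rule mod_diff_cong[OF inverse_exp_less inverse_exp_less e])
      moreover have "lam ^ (b * inverse_exp a) = lam ^ (b * inverse_exp a')"
        by (rule lam_power_mult_cong[OF e])
      ultimately show "(if b < n then inverse (lam ^ (b * inverse_exp (fst (a, b'))))
            * (\<Sum>x\<in>residue_class (c + m - inverse_exp (fst (a, b'))). ?V (snd (a, b')) (x, b)) else 0) =
          (if b < n then inverse (lam ^ (b * inverse_exp (fst (a', b'))))
            * (\<Sum>x\<in>residue_class (c + m - inverse_exp (fst (a', b'))). ?V (snd (a', b')) (x, b)) else 0)"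
        by simp
    qed
    finally show ?thesis .
  qed
  with TC show ?thesis unfolding reduction_kernel_def by blast
qed

lemma tcoef_g_power: assumes s: "s < m" and be: "be \<in> TB m n" and z: "z \<in> TB m n"
  shows "tcoef lam m n (s, 0) be z = (if be = ((fst z + m - s) mod m, snd z) then 1 else 0)"
proof -
  have f: "fst be < m" "fst z < m" "snd z < n" using be z by (auto simp: TB_def mem_Times_iff)
  have "((s + fst be) mod m = fst z) = (fst be = (fst z + m - s) mod m)"
    using mod_add_eq_iff[OF f(1) f(2) s] by (simp add: add.commute)
  then show ?thesis unfolding tcoef_def using f by (cases be) auto
qed

lemma ttmul_g_power_left: assumes s: "s < m"
  shows "ttmul lam m n (ttdelta ((s, 0), (s, 0))) V (z, z') =
    (if z \<in> TB m n \<and> z' \<in> TB m n then V (((fst z + m - s) mod m, snd z), ((fst z' + m - s) mod m, snd z')) else 0)"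
proof -
  have s0: "(s, 0) \<in> TB m n" using s n_pos by (simp add: TB_def)
  have fin: "finite (TB m n)" by (rule finite_TB)
  have "ttmul lam m n (ttdelta ((s, 0), (s, 0))) V (z, z') =
     (\<Sum>be\<in>TB m n. \<Sum>be'\<in>TB m n. V (be, be') * tcoef lam m n (s, 0) be z * tcoef lam m n (s, 0) be' z')"
  proof -
    have "ttmul lam m n (ttdelta ((s, 0), (s, 0))) V (z, z') =
      (\<Sum>al'\<in>TB m n. \<Sum>be\<in>TB m n. \<Sum>be'\<in>TB m n. ttdelta ((s, 0), (s, 0)) ((s, 0), al') * V (be, be') * tcoef lam m n (s, 0) be z * tcoef lam m n al' be' z')"
      unfolding ttmul_def by (simp, rule sum_eq_single[OF fin s0]) (simp add: ttdelta_def)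
    also have "\<dots> = (\<Sum>be\<in>TB m n. \<Sum>be'\<in>TB m n. ttdelta ((s, 0), (s, 0)) ((s, 0), (s, 0)) * V (be, be') * tcoef lam m n (s, 0) be z * tcoef lam m n (s, 0) be' z')"
      by (rule sum_eq_single[OF fin s0]) (simp add: ttdelta_def)
    finally show ?thesis by (simp add: ttdelta_def)
  qed
  also have "\<dots> = (if z \<in> TB m n \<and> z' \<in> TB m n then V (((fst z + m - s) mod m, snd z), ((fst z' + m - s) mod m, snd z')) else 0)"
  proof (cases "z \<in> TB m n \<and> z' \<in> TB m n")
    case True
    let ?b0 = "((fst z + m - s) mod m, snd z)" and ?b0' = "((fst z' + m - s) mod m, snd z')"
    have b0: "?b0 \<in> TB m n" "?b0' \<in> TB m n" using True m_pos by (auto simp: TB_def mem_Times_iff)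
    have "(\<Sum>be\<in>TB m n. \<Sum>be'\<in>TB m n. V (be, be') * tcoef lam m n (s, 0) be z * tcoef lam m n (s, 0) be' z')
        = (\<Sum>be\<in>TB m n. \<Sum>be'\<in>TB m n. if be = ?b0 then (if be' = ?b0' then V (be, be') else 0) else 0)"
      by (intro sum.cong refl) (use True in \<open>simp add: tcoef_g_power[OF s]\<close>)
    also have "\<dots> = (\<Sum>be'\<in>TB m n. if be' = ?b0' then V (?b0, be') else 0)"
      by (subst sum_eq_single[OF fin b0(1)]) auto
    also have "\<dots> = V (?b0, ?b0')"
      by (subst sum_eq_single[OF fin b0(2)]) auto
    finally show ?thesis using True by simp
  next
    case False
    then have "\<And>be be'. tcoef lam m n (s, 0) be z * tcoef lam m n (s, 0) be' z' = 0"
      using tcoef_support by (metis mult_eq_0_iff)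
    then have "(\<Sum>be\<in>TB m n. \<Sum>be'\<in>TB m n. V (be, be') * tcoef lam m n (s, 0) be z * tcoef lam m n (s, 0) be' z') = 0"
      by (intro sum.neutral ballI) (simp only: mult.assoc mult_zero_right)
    then show ?thesis using False by auto
  qed
  finally show ?thesis .
qed

lemma ttpow_g_tensor_g: assumes m1: "1 < m"
  shows "ttpow lam m n (ttdelta ((1, 0), (1, 0))) k = ttdelta ((k mod m, 0), (k mod m, 0))"
proof (induction k)
  case 0 then show ?case by simp
next
  case (Suc k)
  let ?s = "k mod m"
  have s: "?s < m" using m_pos by simp
  have sk: "(1 + ?s) mod m = Suc k mod m" by (simp add: mod_Suc_eq)
  show ?case
  proof
    fix w :: "(nat \<times> nat) \<times> (nat \<times> nat)"
    obtain z z' where w: "w = (z, z')" by (cases w)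
    have L: "ttpow lam m n (ttdelta ((1, 0), (1, 0))) (Suc k) w =
      (if z \<in> TB m n \<and> z' \<in> TB m n then ttdelta ((1, 0), (1, 0)) (((fst z + m - ?s) mod m, snd z), ((fst z' + m - ?s) mod m, snd z')) else 0)"
      using Suc ttmul_g_power_left[OF s] w by simp
    have key: "(((fst x + m - ?s) mod m, snd x) = (1, 0)) = (x = (Suc k mod m, 0))" if x: "x \<in> TB m n" for x
    proof -
      have f: "fst x < m" using x by (simp add: TB_def mem_Times_iff)
      have "((fst x + m - ?s) mod m = 1) = ((1 + ?s) mod m = fst x)"
        using mod_add_eq_iff[OF m1 f s] by auto
      then show ?thesis using sk by (cases x) auto
    qed
    have inTB: "(Suc k mod m, 0) \<in> TB m n" using m_pos n_pos by (simp add: TB_def)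
    show "ttpow lam m n (ttdelta ((1, 0), (1, 0))) (Suc k) w = ttdelta ((Suc k mod m, 0), (Suc k mod m, 0)) w"
    proof (cases "z \<in> TB m n \<and> z' \<in> TB m n")
      case True
      then show ?thesis unfolding L using key[of z] key[of z'] w by (simp add: ttdelta_def)
    next
      case False
      then show ?thesis unfolding L using inTB w by (auto simp: ttdelta_def)
    qed
  qed
qed

definition residue_sums :: "((nat \<times> nat) \<times> (nat \<times> nat) \<Rightarrow> 'k) \<Rightarrow> nat \<Rightarrow> nat \<Rightarrow> nat \<Rightarrow> nat \<Rightarrow> 'k" where
  "residue_sums Z c b c' b' = (\<Sum>a\<in>residue_class c. \<Sum>a'\<in>residue_class c'. Z ((a, b), (a', b')))"

lemma residue_sums_ttmul_g_power:
  assumes s: "s < m"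
  shows "residue_sums (ttmul lam m n (ttdelta ((s, 0), (s, 0))) V) c b c' b' =
    (if b < n \<and> b' < n then residue_sums V (c + m - s) b (c' + m - s) b' else 0)"
proof -
  have "residue_sums (ttmul lam m n (ttdelta ((s, 0), (s, 0))) V) c b c' b' =
      (\<Sum>a\<in>residue_class c. \<Sum>a'\<in>residue_class c'. if b < n \<and> b' < n
         then V (((a + m - s) mod m, b), ((a' + m - s) mod m, b')) else 0)"
    unfolding residue_sums_def
    by (intro sum.cong refl) (auto simp: ttmul_g_power_left[OF s] residue_class_def TB_def)
  also have "\<dots> = (if b < n \<and> b' < n then residue_sums V (c + m - s) b (c' + m - s) b' else 0)"
  proof (cases "b < n \<and> b' < n")
    case True
    have "(\<Sum>a\<in>residue_class c. \<Sum>a'\<in>residue_class c'. V (((a + m - s) mod m, b), ((a' + m - s) mod m, b')))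
      = (\<Sum>a\<in>residue_class c. \<Sum>a'\<in>residue_class (c' + m - s). V (((a + m - s) mod m, b), (a', b')))"
      by (rule sum.cong[OF refl], rule sum_residue_class_shift[OF s])
    also have "\<dots> = residue_sums V (c + m - s) b (c' + m - s) b'"
      unfolding residue_sums_def
      by (rule sum_residue_class_shift[OF s, where g="\<lambda>a. \<Sum>a'\<in>residue_class (c' + m - s). V ((a, b), (a', b'))"])
    finally show ?thesis using True by simp
  next
    case False
    then show ?thesis by (simp only: if_False sum.neutral_const)
  qed
  finally show ?thesis .
qed

lemma residue_sums_tDelta:
  assumes m1: "1 < m" and u: "u \<in> reduction_kernel"
  shows "residue_sums (tDelta lam m n u) c b c' b' = 0"
proof -
  let ?V = "ttpow lam m n (\<lambda>z. ttdelta ((0, 0), (0, 1)) z + ttdelta ((0, 1), (1, 0)) z)"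
  let ?W = "\<lambda>al. ttmul lam m n (ttpow lam m n (ttdelta ((1, 0), (1, 0))) (fst al)) (?V (snd al))"
  let ?F = "\<lambda>al. if b < n \<and> b' < n
    then residue_sums (?V (snd al)) (c + m - fst al) b (c' + m - fst al) b' else 0"
  have "residue_sums (tDelta lam m n u) c b c' b'
      = (\<Sum>a\<in>residue_class c. \<Sum>a'\<in>residue_class c'. \<Sum>al\<in>TB m n. u al * ?W al ((a, b), (a', b')))"
    unfolding residue_sums_def tDelta_def by simp
  also have "\<dots> = (\<Sum>al\<in>TB m n. u al * residue_sums (?W al) c b c' b')"
    unfolding residue_sums_def sum_distrib_left
    by (subst sum.swap, rule sum.cong[OF refl], subst sum.swap, simp)
  also have "\<dots> = (\<Sum>al\<in>TB m n. u al * ?F al)"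
  proof (rule sum.cong[OF refl])
    fix al assume "al \<in> TB m n"
    then have s: "fst al < m" by (simp add: TB_def mem_Times_iff)
    then show "u al * residue_sums (?W al) c b c' b' = u al * ?F al"
      using ttpow_g_tensor_g[OF m1, of "fst al"] residue_sums_ttmul_g_power[OF s] by simp
  qed
  also have "\<dots> = 0"
  proof (rule reduction_kernel_annihilates[OF u])
    fix a a' b1 assume a: "a < m" "a' < m" "a mod n = a' mod n"
    have "residue_class (c + m - a) = residue_class (c + m - a')"
      "residue_class (c' + m - a) = residue_class (c' + m - a')"
      by (rule residue_class_cong, rule mod_diff_cong[OF a])+
    then show "?F (a, b1) = ?F (a', b1)" by (simp add: residue_sums_def)
  qed
  finally show ?thesis .
qed

definition reduce :: "nat \<times> nat \<Rightarrow> nat \<times> nat" where "reduce al = (fst al mod n, snd al)"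

definition reduce_diff :: "nat \<times> nat \<Rightarrow> nat \<times> nat \<Rightarrow> 'k" where
  "reduce_diff al = (\<lambda>z. tdelta al z - tdelta (reduce al) z)"

lemma reduce_TB: "al \<in> TB m n \<Longrightarrow> reduce al \<in> TB m n"
proof -
  assume al: "al \<in> TB m n"
  have "fst al mod n < n" using n_pos by simp
  then have "fst al mod n < m" using n_less_m by simp
  then show ?thesis using al by (auto simp: reduce_def TB_def mem_Times_iff)
qed

lemma sum_residue_class_tdelta: "al \<in> TB m n \<Longrightarrow> (\<Sum>a\<in>residue_class c. tdelta al (a, b)) = (if fst al mod n = c mod n \<and> snd al = b then 1 else (0::'k))"
proof -
  assume al: "al \<in> TB m n"
  have "(\<Sum>a\<in>residue_class c. tdelta al (a, b)) = (\<Sum>a\<in>residue_class c. if a = fst al then (if snd al = b then 1 else 0) else 0)"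
    unfolding tdelta_def by (intro sum.cong refl) (cases al, auto)
  also have "\<dots> = (if fst al \<in> residue_class c then (if snd al = b then 1 else 0) else 0)" by (simp add: finite_residue_class)
  also have "\<dots> = (if fst al mod n = c mod n \<and> snd al = b then 1 else 0)"
    using al by (auto simp: residue_class_def TB_def mem_Times_iff)
  finally show ?thesis .
qed

lemma reduce_diff_kernel: assumes al: "al \<in> TB m n" shows "reduce_diff al \<in> reduction_kernel"
proof -
  have ral: "reduce al \<in> TB m n" by (rule reduce_TB[OF al])
  have "reduce_diff al \<in> TC m n"
  proof -
    have "z \<in> TB m n" if "reduce_diff al z \<noteq> 0" for z
    proof -
      have "z = al \<or> z = reduce al" using that unfolding reduce_diff_def tdelta_def by (auto split: if_splits)
      then show ?thesis using al ral by auto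
    qed
    then show ?thesis unfolding TC_def by blast
  qed
  moreover have "(\<Sum>a\<in>residue_class c. reduce_diff al (a, b)) = 0" for c b
  proof -
    have "(\<Sum>a\<in>residue_class c. reduce_diff al (a, b)) = (\<Sum>a\<in>residue_class c. tdelta al (a, b)) - (\<Sum>a\<in>residue_class c. tdelta (reduce al) (a, b))"
      unfolding reduce_diff_def by (rule sum_subtractf)
    also have "\<dots> = 0"
    proof -
      have A: "(\<Sum>a\<in>residue_class c. tdelta al (a, b)) = (if fst al mod n = c mod n \<and> snd al = b then 1 else (0::'k))"
        by (rule sum_residue_class_tdelta[OF al])
      have B: "(\<Sum>a\<in>residue_class c. tdelta (reduce al) (a, b)) = (if fst al mod n = c mod n \<and> snd al = b then 1 else (0::'k))"
        using sum_residue_class_tdelta[OF ral, where c=c and b=b] by (simp add: reduce_def)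
      show ?thesis by (simp only: A B) simp
    qed
    finally show ?thesis .
  qed
  ultimately show ?thesis unfolding reduction_kernel_def by blast
qed

lemma sum_reduce_fibre: "(\<Sum>al\<in>TB m n. if reduce al = (c, b) then f al else 0) = (if c < n \<and> b < n then (\<Sum>a\<in>residue_class c. f (a, b)) else (0::'k))"
proof -
  have "(\<Sum>al\<in>TB m n. if reduce al = (c, b) then f al else 0) = (\<Sum>a\<in>{0..<m}. \<Sum>b1\<in>{0..<n}. if (a mod n, b1) = (c, b) then f (a, b1) else 0)"
    unfolding sum_TB reduce_def by simp
  also have "\<dots> = (\<Sum>a\<in>{0..<m}. if a mod n = c \<and> b < n then f (a, b) else 0)"
    by (intro sum.cong refl) (auto simp: if_distrib cong: if_cong)
  also have "\<dots> = (if c < n \<and> b < n then (\<Sum>a\<in>residue_class c. f (a, b)) else 0)"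
  proof (cases "c < n \<and> b < n")
    case True
    have "(\<Sum>a\<in>{0..<m}. if a mod n = c \<and> b < n then f (a, b) else 0) = (\<Sum>a\<in>{0..<m}. if a mod n = c then f (a, b) else 0)"
      using True by simp
    also have "\<dots> = (\<Sum>a\<in>{a \<in> {0..<m}. a mod n = c}. f (a, b))"
      by (rule sum.inter_filter[symmetric]) simp
    also have "{a \<in> {0..<m}. a mod n = c} = residue_class c" using True unfolding residue_class_def by auto
    finally show ?thesis using True by simp
  next
    case False
    have "\<forall>a\<in>{0..<m}. \<not> (a mod n = c \<and> b < n)" using False n_pos by auto
    then have "(\<Sum>a\<in>{0..<m}. if a mod n = c \<and> b < n then f (a, b) else 0) = 0"
      by (intro sum.neutral) auto
    then show ?thesis using False by auto
  qed
  finally show ?thesis .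
qed

lemma sum_reduce_fibres: assumes PP: "\<forall>c b c' b'. residue_sums Z c b c' b' = 0"
  shows "(\<Sum>x\<in>TB m n \<times> TB m n. if reduce (fst x) = be \<and> reduce (snd x) = be' then Z x else 0) = 0"
proof -
  obtain c b where be: "be = (c, b)" by (cases be)
  obtain c' b' where be': "be' = (c', b')" by (cases be')
  have "(\<Sum>x\<in>TB m n \<times> TB m n. if reduce (fst x) = be \<and> reduce (snd x) = be' then Z x else 0)
     = (\<Sum>al\<in>TB m n. if reduce al = (c, b) then (\<Sum>al'\<in>TB m n. if reduce al' = (c', b') then Z (al, al') else 0) else 0)"
  proof -
    have "(\<Sum>x\<in>TB m n \<times> TB m n. if reduce (fst x) = (c, b) \<and> reduce (snd x) = (c', b') then Z x else 0)
      = (\<Sum>al\<in>TB m n. \<Sum>al'\<in>TB m n. if reduce al = (c, b) \<and> reduce al' = (c', b') then Z (al, al') else 0)"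
      by (simp add: sum.cartesian_product case_prod_beta, rule sum.cong, auto)
    also have "\<dots> = (\<Sum>al\<in>TB m n. if reduce al = (c, b) then (\<Sum>al'\<in>TB m n. if reduce al' = (c', b') then Z (al, al') else 0) else 0)"
      by (intro sum.cong refl) auto
    finally show ?thesis unfolding be be' .
  qed
  also have "\<dots> = (\<Sum>al\<in>TB m n. if reduce al = (c, b) then (if c' < n \<and> b' < n then (\<Sum>a'\<in>residue_class c'. Z (al, (a', b'))) else 0) else 0)"
    by (simp only: sum_reduce_fibre)
  also have "\<dots> = (if c < n \<and> b < n then (\<Sum>a\<in>residue_class c. if c' < n \<and> b' < n then (\<Sum>a'\<in>residue_class c'. Z ((a, b), (a', b'))) else 0) else 0)"
    by (rule sum_reduce_fibre)
  also have "\<dots> = 0"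
  proof (cases "c' < n \<and> b' < n")
    case True
    then show ?thesis using PP unfolding residue_sums_def by simp
  next
    case False
    then show ?thesis by (simp only: False if_False sum.neutral_const if_cancel)
  qed
  finally show ?thesis .
qed

lemma ITTI_of_residue_sums_zero:
  assumes supp: "\<forall>w. Z w \<noteq> 0 \<longrightarrow> fst w \<in> TB m n \<and> snd w \<in> TB m n"
    and PP: "\<forall>c b c' b'. residue_sums Z c b c' b' = 0"
  shows "Z \<in> ITTI m n reduction_kernel"
proof -
  let ?W = "TB m n \<times> TB m n"
  have finW: "finite ?W" by (simp add: finite_TB)
  let ?us = "\<lambda>x. (\<lambda>z. Z x * reduce_diff (fst x) z)"
  let ?ts = "\<lambda>x. tdelta (snd x) :: nat \<times> nat \<Rightarrow> 'k"
  let ?vs = "\<lambda>x. tdelta (reduce (fst x)) :: nat \<times> nat \<Rightarrow> 'k"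
  let ?ws = "\<lambda>x. (\<lambda>z. Z x * reduce_diff (snd x) z)"
  have mem: "?us x \<in> reduction_kernel \<and> ?ts x \<in> TC m n \<and> ?vs x \<in> TC m n \<and> ?ws x \<in> reduction_kernel" if x: "x \<in> ?W" for x
  proof -
    have f: "fst x \<in> TB m n" "snd x \<in> TB m n" using x by (auto simp: mem_Times_iff)
    show ?thesis
      by (intro conjI reduction_kernel_scale reduce_diff_kernel tdelta_TC reduce_TB f)
  qed
  txt \<open>Write \<open>x \<otimes> y = (x - reduce x) \<otimes> y + reduce x \<otimes> (y - reduce y) + reduce x \<otimes> reduce y\<close>;
    the last terms add up to zero because all residue sums of \<open>Z\<close> vanish.\<close>
  have eq: "Z = (\<lambda>w. \<Sum>x\<in>?W. tens (?us x) (?ts x) w + tens (?vs x) (?ws x) w)"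
  proof
    fix w :: "(nat \<times> nat) \<times> (nat \<times> nat)"
    obtain be be' where w: "w = (be, be')" by (cases w)
    have "(\<Sum>x\<in>?W. tens (?us x) (?ts x) w + tens (?vs x) (?ws x) w)
       = (\<Sum>x\<in>?W. (if x = w then Z x else 0) - (if reduce (fst x) = be \<and> reduce (snd x) = be' then Z x else 0))"
      by (intro sum.cong refl) (auto simp: w tens_def reduce_diff_def tdelta_def algebra_simps)
    also have "\<dots> = (\<Sum>x\<in>?W. if x = w then Z x else 0) - (\<Sum>x\<in>?W. if reduce (fst x) = be \<and> reduce (snd x) = be' then Z x else 0)"
      by (rule sum_subtractf)
    also have "(\<Sum>x\<in>?W. if reduce (fst x) = be \<and> reduce (snd x) = be' then Z x else 0) = 0"
      by (rule sum_reduce_fibres[OF PP])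
    also have "(\<Sum>x\<in>?W. if x = w then Z x else 0) = Z w"
    proof (cases "w \<in> ?W")
      case True then show ?thesis using finW by simp
    next
      case False
      then have "Z w = 0" using supp by (cases w) (auto simp: mem_Times_iff)
      then show ?thesis using False finW by simp
    qed
    finally show "Z w = (\<Sum>x\<in>?W. tens (?us x) (?ts x) w + tens (?vs x) (?ws x) w)" by simp
  qed
  show ?thesis
    by (rule ITTI_finite_sum[OF finW _ eq]) (use mem in blast)
qed

lemma ttmul_support: "ttmul lam m n U V w \<noteq> 0 \<Longrightarrow> fst w \<in> TB m n \<and> snd w \<in> TB m n"
proof -
  assume ne: "ttmul lam m n U V w \<noteq> 0"
  obtain z z' where w: "w = (z, z')" by (cases w)
  show ?thesis
  proof (rule ccontr)
    assume "\<not> (fst w \<in> TB m n \<and> snd w \<in> TB m n)"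
    then have "z \<notin> TB m n \<or> z' \<notin> TB m n" using w by simp
    then have tz: "\<And>al be al' be'. tcoef lam m n al be z * tcoef lam m n al' be' z' = 0"
      using tcoef_support by (metis mult_eq_0_iff)
    have "ttmul lam m n U V w = 0" unfolding ttmul_def w
      by (simp add: mult.assoc tz)
    then show False using ne by simp
  qed
qed

lemma tDelta_support: "\<forall>w. tDelta lam m n u w \<noteq> 0 \<longrightarrow> fst w \<in> TB m n \<and> snd w \<in> TB m n"
proof (intro allI impI)
  fix w assume ne: "tDelta lam m n u w \<noteq> 0"
  then obtain al where "ttmul lam m n (ttpow lam m n (ttdelta ((1, 0), (1, 0))) (fst al))
      (ttpow lam m n (\<lambda>z. ttdelta ((0, 0), (0, 1)) z + ttdelta ((0, 1), (1, 0)) z) (snd al)) w \<noteq> 0"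
    unfolding tDelta_def by (metis (no_types, lifting) mult_zero_right sum.neutral)
  then show "fst w \<in> TB m n \<and> snd w \<in> TB m n" by (rule ttmul_support)
qed

lemma reduction_kernel_hopf_ideal: "hopf_ideal lam m n reduction_kernel"
proof -
  have m1: "1 < m" using n_less_m n_pos by simp
  have ti: "taft_ideal lam m n reduction_kernel"
    unfolding taft_ideal_def using reduction_kernel_subset reduction_kernel_zero reduction_kernel_add tmul_reduction_kernel_left tmul_reduction_kernel_right by blast
  have d: "\<forall>u\<in>reduction_kernel. tDelta lam m n u \<in> ITTI m n reduction_kernel"
  proof
    fix u assume u: "u \<in> reduction_kernel"
    show "tDelta lam m n u \<in> ITTI m n reduction_kernel"
      by (rule ITTI_of_residue_sums_zero[OF tDelta_support]) (use residue_sums_tDelta[OF m1 u] in blast)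
  qed
  show ?thesis unfolding hopf_ideal_def using ti d reduction_kernel_counit tS_reduction_kernel by blast
qed

lemma reduction_kernel_nontrivial: "reduction_kernel \<noteq> {\<lambda>_. 0}"
  using g_power_n_minus_1_in_kernel g_power_n_minus_1_nz by blast

end

context rotation_action begin

lemma m_eq_n:
  assumes H: "n \<noteq> 4 \<or> d \<noteq> 2" and g1: "gcd n d = 1"
    and r_dvd: "r dvd m" and m_pos: "0 < m" and inner: "inner_faithful n lam m r G X"
  shows "m = n"
proof (rule ccontr)
  assume mn: "m \<noteq> n"
  have r_n: "r = n" by (rule r_eq_n[OF H g1])
  have n_dvd_m: "n dvd m" using r_dvd r_n by simp
  then obtain q where q: "m = n * q" ..
  with m_pos mn have "n < m" by (cases q) auto
  interpret T: taft_reduction lam m n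
    by unfold_locales (use n_pos n_dvd_m lam_root r_n \<open>n < m\<close> in auto)
  have ann: "\<forall>t\<in>T.reduction_kernel. \<forall>f\<in>PA n. tact m r G X t f = (\<lambda>_. 0)"
  proof (intro ballI ext)
    fix t and f :: "qpath \<Rightarrow> 'k" and p assume t: "t \<in> T.reduction_kernel" and f: "f \<in> PA n"
    have "tact m r G X t f p = (\<Sum>al\<in>TB m n. t al * (G ^^ fst al) ((X ^^ snd al) f) p)"
      unfolding tact_def r_n by simp
    also have "\<dots> = 0"
    proof (rule T.reduction_kernel_annihilates[OF t])
      fix a a' b assume a: "a < m" "a' < m" "a mod n = a' mod n"
      have fx: "(X ^^ b) f \<in> PA n" by (rule X_lin.funpow_closed[OF f])
      show "(G ^^ fst (a, b)) ((X ^^ snd (a, b)) f) p = (G ^^ fst (a', b)) ((X ^^ snd (a', b)) f) p"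
        using funpow_G_mod[OF H g1 fx, of a] funpow_G_mod[OF H g1 fx, of a'] a(3) by simp
    qed
    finally show "tact m r G X t f p = 0" .
  qed
  have "hopf_ideal lam m r T.reduction_kernel" using T.reduction_kernel_hopf_ideal r_n by simp
  then show False using inner ann T.reduction_kernel_nontrivial unfolding inner_faithful_def by blast
qed

end

theorem lemma3p2:
  fixes lam :: "'k::field" and r m n d :: nat
    and G X :: "(qpath \<Rightarrow> 'k) \<Rightarrow> (qpath \<Rightarrow> 'k)"
    and mu mus gam :: "nat \<Rightarrow> 'k"
  assumes r_gt: "r > 1" and m_pos: "m > 0" and r_dvd: "r dvd m"
    and lam_root: "lam ^ r = 1" and lam_prim: "\<forall>k. 0 < k \<and> k < r \<longrightarrow> lam ^ k \<noteq> 1"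
    and r_char: "of_nat r \<noteq> (0::'k)"
    and n_ge: "n \<ge> 3" and d_pos: "0 < d" and d_le: "d \<le> n - 1"
    and modalg: "taft_module_algebra n lam m r G X"
    and inner: "inner_faithful n lam m r G X"
    and mu_nz: "\<forall>i<n. mu i \<noteq> 0" and mus_nz: "\<forall>i<n. mus i \<noteq> 0"
    and G_vtx: "\<forall>i<n. G (vtx i) = vtx ((i + d) mod n)"
    and G_arr: "\<forall>i<n. G (arr i) = (\<lambda>p. mu i * arr ((i + d) mod n) p)"
    and G_arrs: "\<forall>i<n. G (arrs n i) = (\<lambda>p. mus i * arrs n ((i + d) mod n) p)"
    and X_vtx: "\<forall>i<n. X (vtx i) \<in> span_V n"
    and X_arr: "\<forall>i<n. X (arr i) \<in> span_VA n \<and> X (arrs n i) \<in> span_VA n"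
    and gam_def: "\<forall>i<n. X (vtx i) = (\<lambda>p. gam i * vtx i p - gam i * inverse lam * vtx ((i + d) mod n) p)"
    and gam_nz: "\<exists>j<n. gam j \<noteq> 0"
  shows "r = kappa n d \<and>
    ((n \<noteq> 4 \<or> d \<noteq> 2) \<longrightarrow>
      (\<forall>i<n. gam ((i + 1) mod n) ^ r = (\<Prod>k<r. mu ((i + k * d) mod n)) * gam i ^ r
           \<and> gam ((i + 1) mod n) ^ r = inverse (\<Prod>k<r. mus ((i + k * d) mod n)) * gam i ^ r
           \<and> gam ((i + 1) mod n) ^ r = zeta n d mu i * gam i ^ r
           \<and> gam ((i + 1) mod n) ^ r = inverse (zeta n d mus i) * gam i ^ r) \<and>
      (\<forall>i<n. gam i \<noteq> 0) \<and>
      (\<forall>i<n. zeta n d mus i = inverse (zeta n d mu i)) \<and>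
      (\<Prod>i<n. mu i) = 1 \<and> (\<Prod>i<n. mus i) = 1 \<and>
      (gcd n d = 1 \<longrightarrow> m = n))"
proof -
  interpret rotation_action lam r m n d G X mu mus gam
    using assms by unfold_locales auto
  have "gam ((i + 1) mod n) ^ r = (\<Prod>k<r. mu ((i + k * d) mod n)) * gam i ^ r
      \<and> gam ((i + 1) mod n) ^ r = inverse (\<Prod>k<r. mus ((i + k * d) mod n)) * gam i ^ r"
    if "n \<noteq> 4 \<or> d \<noteq> 2" "i < n" for i
    using gam_Suc_power[OF that] gam_Suc_power_zeta_star[OF that] by (simp add: zeta_eq_prod_r)
  then show ?thesis
    using r_eq_kappa gam_Suc_power gam_Suc_power_zeta_star gam_nz_all zeta_inv
      prod_mu_eq_1 prod_mus_eq_1 m_eq_n[OF _ _ r_dvd m_pos inner]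
    by (intro conjI impI allI) blast+
qed

end
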